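(* A $d$-polytope $P\subset\mathbb{R}^d$ is lattice complete with respect to a $d$-dimensional lattice $\Lambda\subset\mathbb{R}^d$ if and only if for each facet $F$ of $P$ there is a diameter segment $I_F\subset P$ having an endpoint in the relative interior of $F$.
   Context: A lattice $\Lambda\subset\mathbb{R}^d$ is a discrete subgroup spanning $\mathbb{R}^d$. A segment $[a,b]$ is a lattice segment if $b-a$ is parallel to a nonzero vector of $\Lambda$; its lattice length is $|b-a|/|v|$ where $v$ generates $\Lambda\cap\mathrm{span}\{b-a\}$ and is a positive multiple of $b-a$. The lattice diameter $\mathrm{diam}_\Lambda(C)$ of a convex body $C$ is the maximum lattice length of a lattice segment contained in $C$; a diameter segment of $C$ is a lattice segment contained in $C$ whose lattice length equals $\mathrm{diam}_\Lambda(C)$. $C$ is lattice complete if no convex body $C'\supsetneq C$ has $\mathrm{diam}_\Lambda(C')=\mathrm{diam}_\Lambda(C)$. Convex bodies are compact convex sets with non-empty interior. *)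

theory Defs
  imports "HOL-Analysis.Analysis"
begin

definition is_lattice :: "'a::euclidean_space set \<Rightarrow> bool" where
  "is_lattice L \<longleftrightarrow>
     0 \<in> L \<and> (\<forall>x\<in>L. \<forall>y\<in>L. x + y \<in> L) \<and> (\<forall>x\<in>L. - x \<in> L) \<and>
     (\<exists>e>0. \<forall>x\<in>L. x \<noteq> 0 \<longrightarrow> e \<le> norm x) \<and>
     span L = UNIV"

definition convex_body :: "'a::euclidean_space set \<Rightarrow> bool" where
  "convex_body C \<longleftrightarrow> compact C \<and> convex C \<and> interior C \<noteq> {}"

definition lattice_segment :: "'a::euclidean_space set \<Rightarrow> 'a \<Rightarrow> 'a \<Rightarrow> bool" where
  "lattice_segment L a b \<longleftrightarrow> (\<exists>v\<in>L. v \<noteq> 0 \<and> (\<exists>c::real. b - a = c *\<^sub>R v))"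

definition lattice_length :: "'a::euclidean_space set \<Rightarrow> 'a \<Rightarrow> 'a \<Rightarrow> real" where
  "lattice_length L a b =
     norm (b - a) /
     norm (THE v. v \<in> L \<and> (\<exists>c>0. v = c *\<^sub>R (b - a)) \<and>
                  L \<inter> span {b - a} = range (\<lambda>k::int. of_int k *\<^sub>R v))"

definition lattice_diam :: "'a::euclidean_space set \<Rightarrow> 'a set \<Rightarrow> real" where
  "lattice_diam L C =
     Sup {lattice_length L a b | a b. lattice_segment L a b \<and> closed_segment a b \<subseteq> C}"

definition diameter_segment :: "'a::euclidean_space set \<Rightarrow> 'a set \<Rightarrow> 'a \<Rightarrow> 'a \<Rightarrow> bool" where
  "diameter_segment L C a b \<longleftrightarrow>
     lattice_segment L a b \<and> closed_segment a b \<subseteq> C \<and> lattice_length L a b = lattice_diam L C"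

definition lattice_complete :: "'a::euclidean_space set \<Rightarrow> 'a set \<Rightarrow> bool" where
  "lattice_complete L C \<longleftrightarrow>
     \<not> (\<exists>C'. convex_body C' \<and> C \<subset> C' \<and> lattice_diam L C' = lattice_diam L C)"

end

theory Submission
  imports Defs
begin

(*
  If every facet F of P carries a diameter segment ending in its relative interior, P is
  complete: a convex body C strictly containing P contains a point x beyond some facet F, and the
  diameter segment ending at p in the relative interior of F can be prolonged slightly beyond p
  inside the pyramid conv (F \<union> {x}) \<subseteq> C, so C has a larger lattice diameter.

  Conversely, suppose no diameter segment of P ends in the relative interior of the facet F. Glue
  to P the thin cap conv (P \<union> {c + \<epsilon> n}) over a relative interior point c of F, n the outer
  normal of F. Inside a bounded set only finitely many primitive lattice directions g can realise
  lattice length diam P, so it suffices to bound the chords of the cap in a single such direction.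
  Chords of P in direction g of length diam P avoid the relative interior of F; as P is a polytope,
  a chord of P ending at a point p of F is in fact shorter than diam P by a margin proportional to
  the least slack of p in the inequalities not defining F. This margin absorbs the length a chord
  gains inside the cap once \<epsilon> is small, so the cap has the same lattice diameter as P, and P is
  not complete.
*)

section \<open>Lattice length and lattice diameter\<close>

definition primitive_generator :: "'a::euclidean_space set \<Rightarrow> 'a \<Rightarrow> 'a \<Rightarrow> bool" where
  "primitive_generator L w v \<longleftrightarrow>
     v \<in> L \<and> (\<exists>c>0. v = c *\<^sub>R w) \<and> L \<inter> span {w} = range (\<lambda>k::int. of_int k *\<^sub>R v)"

definition lattice_primitive :: "'a::euclidean_space set \<Rightarrow> 'a \<Rightarrow> bool" where
  "lattice_primitive L g \<longleftrightarrow> g \<noteq> 0 \<and> primitive_generator L g g"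

lemma is_lattice_int_scaleR:
  assumes "is_lattice L" "v \<in> L"
  shows "of_int k *\<^sub>R v \<in> L"
proof -
  have nat: "of_nat m *\<^sub>R v \<in> L" for m
  proof (induction m)
    case 0
    then show ?case using assms by (simp add: is_lattice_def)
  next
    case (Suc m)
    then have "v + of_nat m *\<^sub>R v \<in> L" using assms by (simp add: is_lattice_def)
    then show ?case by (simp add: algebra_simps)
  qed
  show ?thesis
  proof (cases "k \<ge> 0")
    case True
    then show ?thesis using nat[of "nat k"] by simp
  next
    case False
    have "- (of_nat (nat (- k)) *\<^sub>R v) \<in> L"
      using nat[of "nat (- k)"] assms by (simp add: is_lattice_def)
    then show ?thesis using False by simp
  qed
qed

lemma is_lattice_finite_cball:
  assumes "is_lattice L"
  shows "finite (L \<inter> cball 0 R)"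
proof (rule ccontr)
  assume inf: "infinite (L \<inter> cball 0 R)"
  obtain e where e: "e > 0" "\<And>x. x \<in> L \<Longrightarrow> x \<noteq> 0 \<Longrightarrow> e \<le> norm x"
    using assms by (auto simp: is_lattice_def)
  obtain x where "x islimpt (L \<inter> cball 0 R)"
    using inf compact_cball[of 0 R] unfolding compact_eq_Bolzano_Weierstrass by (meson inf_le2)
  then have S: "infinite (L \<inter> cball 0 R \<inter> ball x (e/2))"
    using e unfolding islimpt_eq_infinite_ball by simp
  then obtain y1 where y1: "y1 \<in> L \<inter> ball x (e/2)"
    using infinite_imp_nonempty by blast
  have "infinite (L \<inter> cball 0 R \<inter> ball x (e/2) - {y1})" using S by simp
  then obtain y2 where y2: "y2 \<in> L \<inter> ball x (e/2)" "y1 \<noteq> y2"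
    using infinite_imp_nonempty by blast
  have "dist y1 y2 < e" using y1 y2 dist_triangle_half_l[of y1 x e y2] by (simp add: dist_commute)
  have "y1 + - y2 \<in> L" using y1 y2 assms unfolding is_lattice_def by blast
  then show False using e(2)[of "y1 - y2"] y2(2) \<open>dist y1 y2 < e\<close> by (simp add: dist_norm)
qed

lemma is_lattice_obtain_nonzero:
  assumes "is_lattice L"
  obtains u where "u \<in> L" "u \<noteq> 0"
proof -
  have "\<not> L \<subseteq> {0}"
  proof
    assume "L \<subseteq> {0}"
    then have "span L \<subseteq> {0}" using span_mono[of L "{0}"] by simp
    then show False using assms nonzero_Basis SOME_Basis by (force simp: is_lattice_def)
  qed
  then show ?thesis using that by blast
qed

lemma primitive_generator_unique:
  assumes "primitive_generator L w v1" "primitive_generator L w v2"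
  shows "v1 = v2"
proof -
  obtain c1 where c1: "c1 > 0" "v1 = c1 *\<^sub>R w" using assms(1) by (auto simp: primitive_generator_def)
  obtain c2 where c2: "c2 > 0" "v2 = c2 *\<^sub>R w" using assms(2) by (auto simp: primitive_generator_def)
  show ?thesis
  proof (cases "w = 0")
    case True
    then show ?thesis using c1 c2 by simp
  next
    case False
    have "v1 \<in> L \<inter> span {w}" "v2 \<in> L \<inter> span {w}"
      using assms c1 c2 by (auto simp: primitive_generator_def span_clauses)
    then obtain k j :: int where k: "v1 = of_int k *\<^sub>R v2" and j: "v2 = of_int j *\<^sub>R v1"
      using assms unfolding primitive_generator_def by blast
    have e1: "c1 = of_int k * c2" and e2: "c2 = of_int j * c1"
      using k j c1 c2 False by (simp_all add: scaleR_right_imp_eq)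
    have "of_int (k * j) = (1::real)" using e1 e2 c1 by (simp add: algebra_simps)
    then have "k * j = 1" by linarith
    moreover have "k > 0" using e1 c1 c2 by (simp add: zero_less_mult_iff)
    ultimately have "k = 1" using zmult_eq_1_iff by auto
    then show ?thesis using k by simp
  qed
qed

lemma lattice_length_eq:
  assumes "primitive_generator L (b - a) g"
  shows "lattice_length L a b = norm (b - a) / norm g"
proof -
  have "(THE v. primitive_generator L (b - a) v) = g"
    using assms primitive_generator_unique by blast
  then show ?thesis by (simp add: lattice_length_def primitive_generator_def)
qed

lemma lattice_length_refl [simp]: "lattice_length L a a = 0"
  by (simp add: lattice_length_def)

lemma span_singleton_scaleR:
  assumes "t \<noteq> 0"
  shows "span {t *\<^sub>R w} = span {w}"
proof -
  have "w \<in> span {t *\<^sub>R w}"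
    using span_scale[OF span_base, of "t *\<^sub>R w" "{t *\<^sub>R w}" "1/t"] assms by simp
  then show ?thesis by (simp add: span_eq span_base span_scale)
qed

lemma primitive_generator_scaleR:
  assumes "primitive_generator L w v" "t > 0"
  shows "primitive_generator L (t *\<^sub>R w) v"
proof -
  obtain c where c: "c > 0" "v = c *\<^sub>R w" using assms by (auto simp: primitive_generator_def)
  then have "v = (c / t) *\<^sub>R (t *\<^sub>R w)" "c / t > 0" using assms(2) by auto
  then show ?thesis using assms span_singleton_scaleR[of t w] by (auto simp: primitive_generator_def)
qed

lemma primitive_generator_uminus:
  assumes "primitive_generator L w v" "is_lattice L"
  shows "primitive_generator L (- w) (- v)"
proof -
  obtain c where "c > 0" "v = c *\<^sub>R w" using assms by (auto simp: primitive_generator_def)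
  moreover have "span {- w} = span {w}" using span_singleton_scaleR[of "-1" w] by simp
  moreover have "range (\<lambda>k::int. of_int k *\<^sub>R (- v)) = range (\<lambda>k::int. of_int k *\<^sub>R v)"
    using image_image[of "\<lambda>k::int. of_int k *\<^sub>R v" uminus UNIV] surj_uminus by simp
  moreover have "- v \<in> L" using assms by (auto simp: primitive_generator_def is_lattice_def)
  ultimately show ?thesis using assms by (auto simp: primitive_generator_def)
qed

lemma lattice_least_positive_multiple:
  assumes L: "is_lattice L" and w: "w \<noteq> 0" and t1: "t1 > 0" "t1 *\<^sub>R w \<in> L"
  obtains t0 where "t0 > 0" "t0 *\<^sub>R w \<in> L" "\<And>t. 0 < t \<Longrightarrow> t *\<^sub>R w \<in> L \<Longrightarrow> t0 \<le> t"
proof -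
  define T where "T = {t. 0 < t \<and> t \<le> t1 \<and> t *\<^sub>R w \<in> L}"
  have "(\<lambda>t. t *\<^sub>R w) ` T \<subseteq> L \<inter> cball 0 (t1 * norm w)"
    by (auto simp: T_def mult_right_mono)
  then have "finite ((\<lambda>t. t *\<^sub>R w) ` T)"
    using is_lattice_finite_cball[OF L] finite_subset by blast
  moreover have "inj_on (\<lambda>t. t *\<^sub>R w) T" using w by (auto simp: inj_on_def)
  ultimately have fin: "finite T" by (rule finite_imageD)
  have "t1 \<in> T" using t1 by (simp add: T_def)
  then have ne: "T \<noteq> {}" by blast
  show ?thesis
  proof (rule that[of "Min T"])
    have "Min T \<in> T" using fin ne by (rule Min_in)
    then show "0 < Min T" "Min T *\<^sub>R w \<in> L" by (simp_all add: T_def)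
    fix t assume t: "0 < t" "t *\<^sub>R w \<in> L"
    show "Min T \<le> t"
    proof (cases "t \<le> t1")
      case True
      then show ?thesis using t fin by (simp add: T_def)
    next
      case False
      have "Min T \<le> t1" using fin \<open>t1 \<in> T\<close> by simp
      then show ?thesis using False by simp
    qed
  qed
qed

text \<open>The least positive lattice multiple of a direction generates the lattice points on its
  line: a lattice point \<open>s w\<close> differs from \<open>\<lfloor>s/t\<^sub>0\<rfloor> t\<^sub>0 w\<close> by a lattice point \<open>r w\<close> with
  \<open>0 \<le> r < t\<^sub>0\<close>, forcing \<open>r = 0\<close>.\<close>
lemma primitive_generatorI:
  assumes L: "is_lattice L" and t0: "t0 > 0" "t0 *\<^sub>R w \<in> L"
    and least: "\<And>t. 0 < t \<Longrightarrow> t *\<^sub>R w \<in> L \<Longrightarrow> t0 \<le> t"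
  shows "primitive_generator L w (t0 *\<^sub>R w)"
proof -
  define v where "v = t0 *\<^sub>R w"
  have "L \<inter> span {w} \<subseteq> range (\<lambda>k::int. of_int k *\<^sub>R v)"
  proof
    fix y assume y: "y \<in> L \<inter> span {w}"
    then obtain s where s: "y = s *\<^sub>R w" by (auto simp: span_singleton)
    define k where "k = \<lfloor>s / t0\<rfloor>"
    define r where "r = s - of_int k * t0"
    have "of_int k \<le> s / t0" "s / t0 < of_int k + 1" unfolding k_def by linarith+
    then have r: "0 \<le> r" "r < t0" using t0 by (auto simp: r_def field_simps)
    have "- (of_int k *\<^sub>R v) \<in> L"
      using is_lattice_int_scaleR[OF L t0(2), of "- k"] by (simp add: v_def)
    then have "y + - (of_int k *\<^sub>R v) \<in> L" using y L unfolding is_lattice_def by blast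
    moreover have "y + - (of_int k *\<^sub>R v) = r *\<^sub>R w"
      by (simp add: s v_def r_def algebra_simps)
    ultimately have "r = 0" using least[of r] r by force
    then have "y = of_int k *\<^sub>R v" by (simp add: s v_def r_def)
    then show "y \<in> range (\<lambda>k::int. of_int k *\<^sub>R v)" by blast
  qed
  moreover have "range (\<lambda>k::int. of_int k *\<^sub>R v) \<subseteq> L \<inter> span {w}"
    using is_lattice_int_scaleR[OF L t0(2)] by (auto simp: span_singleton v_def)
  ultimately show ?thesis using t0 unfolding primitive_generator_def v_def by blast
qed

lemma primitive_generator_exists:
  assumes L: "is_lattice L" and "lattice_segment L a b" "a \<noteq> b"
  obtains g where "primitive_generator L (b - a) g"
proof -
  obtain u c where u: "u \<in> L" "u \<noteq> 0" and c: "b - a = c *\<^sub>R u"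
    using assms(2) unfolding lattice_segment_def by blast
  have "c \<noteq> 0" using c assms(3) by auto
  have "\<bar>1 / c\<bar> *\<^sub>R (b - a) \<in> L"
  proof (cases "c > 0")
    case True
    then show ?thesis using c u by simp
  next
    case False
    then show ?thesis using c u L \<open>c \<noteq> 0\<close> by (simp add: is_lattice_def)
  qed
  moreover have "\<bar>1 / c\<bar> > 0" "b - a \<noteq> 0" using \<open>c \<noteq> 0\<close> assms(3) by simp_all
  ultimately obtain t0 where "t0 > 0" "t0 *\<^sub>R (b - a) \<in> L"
    "\<And>t. 0 < t \<Longrightarrow> t *\<^sub>R (b - a) \<in> L \<Longrightarrow> t0 \<le> t"
    using lattice_least_positive_multiple[OF L] by blast
  then show ?thesis using that primitive_generatorI[OF L] by blast
qed

lemma primitive_generator_lattice_primitive: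
  assumes "primitive_generator L w g" "w \<noteq> 0"
  shows "lattice_primitive L g" "w = (norm w / norm g) *\<^sub>R g"
proof -
  obtain c where c: "c > 0" "g = c *\<^sub>R w" using assms by (auto simp: primitive_generator_def)
  then show "w = (norm w / norm g) *\<^sub>R g" using assms(2) by simp
  have "span {g} = span {w}" using c span_singleton_scaleR[of c w] by simp
  then have "primitive_generator L g g"
    using assms(1) unfolding primitive_generator_def by (auto intro: exI[of _ 1])
  then show "lattice_primitive L g" using c assms(2) by (simp add: lattice_primitive_def)
qed

lemma lattice_segment_refl:
  assumes "is_lattice L"
  shows "lattice_segment L z z"
proof -
  obtain u where "u \<in> L" "u \<noteq> 0" using is_lattice_obtain_nonzero[OF assms] .
  then show ?thesis unfolding lattice_segment_def by (intro bexI[of _ u]) auto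
qed

lemma lattice_segment_along:
  assumes "v \<in> L" "v \<noteq> 0"
  shows "lattice_segment L p (p + t *\<^sub>R v)"
  using assms unfolding lattice_segment_def by auto

lemma lattice_length_along_primitive:
  assumes "lattice_primitive L g" "t > 0"
  shows "lattice_length L p (p + t *\<^sub>R g) = t"
proof -
  have "primitive_generator L ((p + t *\<^sub>R g) - p) g"
    using primitive_generator_scaleR[of L g g t] assms by (simp add: lattice_primitive_def)
  then show ?thesis using assms by (simp add: lattice_length_eq lattice_primitive_def)
qed

lemma lattice_length_stretch:
  assumes L: "is_lattice L" and ab: "lattice_segment L a b" and s: "s > 0"
  shows "lattice_segment L (b - s *\<^sub>R (b - a)) b"
    and "lattice_length L (b - s *\<^sub>R (b - a)) b = s * lattice_length L a b"
proof -
  obtain v c where "v \<in> L" "v \<noteq> 0" "b - a = c *\<^sub>R v"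
    using ab unfolding lattice_segment_def by blast
  then show "lattice_segment L (b - s *\<^sub>R (b - a)) b"
    unfolding lattice_segment_def by (intro bexI[of _ v]) auto
  show "lattice_length L (b - s *\<^sub>R (b - a)) b = s * lattice_length L a b"
  proof (cases "a = b")
    case False
    then obtain g where g: "primitive_generator L (b - a) g"
      using primitive_generator_exists[OF L ab] by blast
    then have "primitive_generator L (b - (b - s *\<^sub>R (b - a))) g"
      using primitive_generator_scaleR[OF g s] by simp
    then show ?thesis using g s by (simp add: lattice_length_eq)
  qed simp
qed

lemma lattice_length_commute:
  assumes L: "is_lattice L" and ab: "lattice_segment L a b"
  shows "lattice_length L b a = lattice_length L a b"
proof (cases "a = b")
  case False
  then obtain g where g: "primitive_generator L (b - a) g"
    using primitive_generator_exists[OF L ab] by blast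
  then have "primitive_generator L (a - b) (- g)"
    using primitive_generator_uminus[OF g L] by simp
  then show ?thesis using g by (simp add: lattice_length_eq norm_minus_commute)
qed simp

lemma lattice_segment_commute:
  assumes "lattice_segment L a b"
  shows "lattice_segment L b a"
proof -
  obtain v c where "v \<in> L" "v \<noteq> 0" "b - a = c *\<^sub>R v"
    using assms unfolding lattice_segment_def by blast
  moreover have "a - b = (- c) *\<^sub>R v" using \<open>b - a = c *\<^sub>R v\<close> by (metis minus_diff_eq scaleR_minus_left)
  ultimately show ?thesis unfolding lattice_segment_def by blast
qed

lemma lattice_length_le_norm_div:
  assumes L: "is_lattice L" and ab: "lattice_segment L a b"
    and e: "e > 0" "\<And>x. x \<in> L \<Longrightarrow> x \<noteq> 0 \<Longrightarrow> e \<le> norm x"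
  shows "lattice_length L a b \<le> norm (b - a) / e"
proof (cases "a = b")
  case False
  then obtain g where g: "primitive_generator L (b - a) g"
    using primitive_generator_exists[OF L ab] by blast
  then have "e \<le> norm g"
    using e(2) primitive_generator_lattice_primitive[OF g] False
    by (simp add: lattice_primitive_def primitive_generator_def)
  then show ?thesis using e(1) by (simp add: lattice_length_eq[OF g] frac_le)
qed simp

lemma bdd_above_lattice_lengths:
  assumes L: "is_lattice L" and "bounded C"
  shows "bdd_above {lattice_length L a b | a b. lattice_segment L a b \<and> closed_segment a b \<subseteq> C}"
proof -
  obtain e where e: "e > 0" "\<And>x. x \<in> L \<Longrightarrow> x \<noteq> 0 \<Longrightarrow> e \<le> norm x"
    using L by (auto simp: is_lattice_def)
  obtain B where B: "\<forall>x\<in>C. norm x \<le> B" using assms(2) by (auto simp: bounded_iff)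
  have "lattice_length L a b \<le> 2 * B / e"
    if "lattice_segment L a b" "closed_segment a b \<subseteq> C" for a b
  proof -
    have "norm a \<le> B" "norm b \<le> B" using B that(2) by auto
    then have "norm (b - a) \<le> 2 * B" using norm_triangle_ineq4[of b a] by linarith
    then have "norm (b - a) / e \<le> 2 * B / e" using e(1) by (simp add: divide_right_mono)
    then show ?thesis using lattice_length_le_norm_div[OF L that(1) e] by linarith
  qed
  then show ?thesis by (intro bdd_aboveI[of _ "2 * B / e"]) blast
qed

lemma lattice_length_le_diam:
  assumes "is_lattice L" "bounded C" "lattice_segment L a b" "closed_segment a b \<subseteq> C"
  shows "lattice_length L a b \<le> lattice_diam L C"
  unfolding lattice_diam_def
proof (rule cSup_upper)
  show "lattice_length L a b
    \<in> {lattice_length L a b | a b. lattice_segment L a b \<and> closed_segment a b \<subseteq> C}"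
    using assms(3,4) by blast
qed (rule bdd_above_lattice_lengths[OF assms(1,2)])

lemma lattice_diam_le:
  assumes "is_lattice L" "C \<noteq> {}"
    and "\<And>a b. lattice_segment L a b \<Longrightarrow> closed_segment a b \<subseteq> C \<Longrightarrow> lattice_length L a b \<le> M"
  shows "lattice_diam L C \<le> M"
  unfolding lattice_diam_def
proof (rule cSup_least)
  obtain z where "z \<in> C" using assms(2) by blast
  then have "lattice_segment L z z \<and> closed_segment z z \<subseteq> C"
    using lattice_segment_refl[OF assms(1)] by simp
  then show "{lattice_length L a b | a b. lattice_segment L a b \<and> closed_segment a b \<subseteq> C} \<noteq> {}"
    by blast
next
  fix l assume "l \<in> {lattice_length L a b | a b. lattice_segment L a b \<and> closed_segment a b \<subseteq> C}"
  then show "l \<le> M" using assms(3) by blast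
qed

lemma lattice_diam_mono:
  assumes "is_lattice L" "C \<noteq> {}" "C \<subseteq> C'" "bounded C'"
  shows "lattice_diam L C \<le> lattice_diam L C'"
proof (rule lattice_diam_le[OF assms(1,2)])
  fix a b assume "lattice_segment L a b" "closed_segment a b \<subseteq> C"
  then show "lattice_length L a b \<le> lattice_diam L C'"
    using lattice_length_le_diam[OF assms(1,4)] assms(3) by blast
qed

lemma lattice_diam_pos:
  assumes L: "is_lattice L" and C: "convex_body C"
  shows "0 < lattice_diam L C"
proof -
  obtain u where u: "u \<in> L" "u \<noteq> 0" using is_lattice_obtain_nonzero[OF L] by blast
  obtain z where "z \<in> interior C" using C by (auto simp: convex_body_def)
  then obtain r where r: "r > 0" "ball z r \<subseteq> C" using mem_interior by blast
  define b where "b = z + (r / (2 * norm u)) *\<^sub>R u"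
  have "b \<in> ball z r" using u r by (simp add: b_def dist_norm)
  then have "closed_segment z b \<subseteq> ball z r"
    using r(1) by (intro closed_segment_subset) auto
  then have sub: "closed_segment z b \<subseteq> C" using r(2) by blast
  have seg: "lattice_segment L z b" using lattice_segment_along[OF u] by (simp add: b_def)
  have "z \<noteq> b" using u r by (simp add: b_def)
  then obtain g where g: "primitive_generator L (b - z) g"
    using primitive_generator_exists[OF L seg] by blast
  have "g \<noteq> 0"
    using primitive_generator_lattice_primitive(1)[OF g] \<open>z \<noteq> b\<close> by (simp add: lattice_primitive_def)
  then have "0 < lattice_length L z b" using \<open>z \<noteq> b\<close> by (simp add: lattice_length_eq[OF g])
  also have "\<dots> \<le> lattice_diam L C"
    using C compact_imp_bounded lattice_length_le_diam[OF L _ seg sub]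
    unfolding convex_body_def by blast
  finally show ?thesis .
qed

lemma diameter_segment_commute:
  assumes "is_lattice L" "diameter_segment L C a b"
  shows "diameter_segment L C b a"
  using assms lattice_length_commute[OF assms(1)] lattice_segment_commute[of L a b]
  unfolding diameter_segment_def by (simp add: closed_segment_commute)

definition chords_le :: "'a::real_vector set \<Rightarrow> 'a \<Rightarrow> real \<Rightarrow> bool" where
  "chords_le C g D \<longleftrightarrow> (\<forall>p t. p \<in> C \<longrightarrow> p + t *\<^sub>R g \<in> C \<longrightarrow> 0 \<le> t \<longrightarrow> t \<le> D)"

lemma chords_le_uminus: "chords_le C (- g) D \<longleftrightarrow> chords_le C g D"
proof -
  have "chords_le C g D" if "chords_le C (- g) D" for g :: 'a
    unfolding chords_le_def
  proof (intro allI impI)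
    fix p t assume "p \<in> C" "p + t *\<^sub>R g \<in> C" "0 \<le> t"
    then show "t \<le> D" using that[unfolded chords_le_def, rule_format, of "p + t *\<^sub>R g" t] by simp
  qed
  from this[of g] this[of "- g"] show ?thesis by auto
qed

lemma chords_le_lattice_diam:
  assumes L: "is_lattice L" and C: "bounded C" "convex C" and g: "lattice_primitive L g"
  shows "chords_le C g (lattice_diam L C)"
  unfolding chords_le_def
proof (intro allI impI)
  fix p t assume p: "p \<in> C" "p + t *\<^sub>R g \<in> C" and t: "0 \<le> t"
  show "t \<le> lattice_diam L C"
  proof (cases "t = 0")
    case True
    then show ?thesis
      using lattice_length_le_diam[OF L C(1) lattice_segment_refl[OF L], of p] p(1) by simp
  next
    case False
    have "lattice_segment L p (p + t *\<^sub>R g)"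
      using g lattice_segment_along by (auto simp: lattice_primitive_def primitive_generator_def)
    moreover have "closed_segment p (p + t *\<^sub>R g) \<subseteq> C" using p C(2) closed_segment_subset by blast
    ultimately have "lattice_length L p (p + t *\<^sub>R g) \<le> lattice_diam L C"
      by (rule lattice_length_le_diam[OF L C(1)])
    then show ?thesis using lattice_length_along_primitive[OF g] t False by simp
  qed
qed

lemma diameter_segment_along_primitive:
  assumes L: "is_lattice L" and C: "convex C" and g: "lattice_primitive L g"
    and D: "lattice_diam L C > 0" and p: "p \<in> C" "p + lattice_diam L C *\<^sub>R g \<in> C"
  shows "diameter_segment L C p (p + lattice_diam L C *\<^sub>R g)"
proof -
  have "closed_segment p (p + lattice_diam L C *\<^sub>R g) \<subseteq> C" using p C closed_segment_subset by blast
  moreover have "lattice_segment L p (p + lattice_diam L C *\<^sub>R g)"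
    using g lattice_segment_along by (auto simp: lattice_primitive_def primitive_generator_def)
  ultimately show ?thesis
    using lattice_length_along_primitive[OF g D] by (simp add: diameter_segment_def)
qed

text \<open>Only primitive directions of norm at most \<open>2 R / D\<close> can carry a lattice segment of lattice
  length above \<open>D\<close> inside a ball of radius \<open>R\<close>.\<close>
lemma lattice_diam_le_if_chords_le:
  assumes L: "is_lattice L" and C: "C \<noteq> {}" "C \<subseteq> cball 0 R" and D: "D > 0"
    and chords: "\<And>g. lattice_primitive L g \<Longrightarrow> norm g \<le> 2 * R / D \<Longrightarrow> chords_le C g D"
  shows "lattice_diam L C \<le> D"
proof (rule lattice_diam_le[OF L C(1)])
  fix a b assume seg: "lattice_segment L a b" and sub: "closed_segment a b \<subseteq> C"
  show "lattice_length L a b \<le> D"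
  proof (cases "a = b")
    case False
    obtain g where g: "primitive_generator L (b - a) g"
      using primitive_generator_exists[OF L seg False] by blast
    have g': "lattice_primitive L g" "b - a = (norm (b - a) / norm g) *\<^sub>R g"
      using primitive_generator_lattice_primitive[OF g] False by auto
    have len: "lattice_length L a b = norm (b - a) / norm g" by (rule lattice_length_eq[OF g])
    have "norm a \<le> R" "norm b \<le> R" using sub C(2) by auto
    then have ba: "norm (b - a) \<le> 2 * R" using norm_triangle_ineq4[of b a] by linarith
    show ?thesis
    proof (cases "norm g \<le> 2 * R / D")
      case True
      have "a \<in> C" "a + (norm (b - a) / norm g) *\<^sub>R g \<in> C"
        using sub g'(2) by (auto simp: algebra_simps)
      then show ?thesis
        using chords[OF g'(1) True] len unfolding chords_le_def by simp
    next
      case False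
      then have "norm (b - a) < D * norm g" using ba D by (simp add: field_simps)
      then show ?thesis using len g'(1) by (simp add: lattice_primitive_def divide_le_eq)
    qed
  qed (use D in simp)
qed

section \<open>Polytopes and their facets\<close>

lemma polytope_imp_convex_body:
  fixes P :: "'a::euclidean_space set"
  assumes "polytope P" "aff_dim P = int DIM('a)"
  shows "convex_body P"
proof -
  have "P \<noteq> {}" using assms(2) by auto
  then have "rel_interior P \<noteq> {}" using assms(1) polytope_imp_convex rel_interior_eq_empty by blast
  then have "interior P \<noteq> {}" using assms(2) interior_rel_interior_gen[of P] by simp
  then show ?thesis
    using assms(1) polytope_imp_compact polytope_imp_convex by (auto simp: convex_body_def)
qed

lemma facet_affine_hull:
  fixes P :: "'a::euclidean_space set"
  assumes "aff_dim P = int DIM('a)" "F facet_of P" "n \<noteq> 0" "F = P \<inter> {y. n \<bullet> y = h}"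
  shows "affine hull F = {y. n \<bullet> y = h}"
proof -
  have "aff_dim F = aff_dim {y. n \<bullet> y = h}" using assms by (simp add: facet_of_def)
  then have "affine hull F = affine hull {y. n \<bullet> y = h}"
    using aff_dim_eq_full_gen[of F "{y. n \<bullet> y = h}"] assms(4) by auto
  then show ?thesis by (simp add: affine_hyperplane)
qed

lemma polyhedron_obtain_separating_facet:
  fixes P :: "'a::euclidean_space set"
  assumes P: "polyhedron P" "aff_dim P = int DIM('a)" and x: "x \<notin> P"
  obtains F n h where "F facet_of P" "n \<noteq> 0" "P \<subseteq> {y. n \<bullet> y \<le> h}"
    "F = P \<inter> {y. n \<bullet> y = h}" "h < n \<bullet> x"
proof -
  obtain FF where fin: "finite FF" and eq: "P = affine hull P \<inter> \<Inter>FF"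
    and faces: "\<forall>H\<in>FF. \<exists>a b. a \<noteq> 0 \<and> H = {x. a \<bullet> x \<le> b}"
    and min: "\<And>F'. F' \<subset> FF \<Longrightarrow> P \<subset> affine hull P \<inter> \<Inter>F'"
    using P(1) unfolding polyhedron_Int_affine_minimal by blast
  obtain a b where ab: "\<And>H. H \<in> FF \<Longrightarrow> a H \<noteq> 0 \<and> H = {x. a H \<bullet> x \<le> b H}"
    using bchoice[OF faces] by (metis (no_types))
  have "affine hull P = UNIV" using P(2) aff_dim_eq_full by blast
  moreover have "x \<notin> affine hull P \<inter> \<Inter>FF" by (subst eq[symmetric]) (rule x)
  ultimately have "x \<notin> \<Inter>FF" by simp
  then obtain H where H: "H \<in> FF" "x \<notin> H" by blast
  define n0 h0 where "n0 = a H" and "h0 = b H"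
  have H_eq: "H = {y. n0 \<bullet> y \<le> h0}" "n0 \<noteq> 0" using ab[OF H(1)] by (simp_all add: n0_def h0_def)
  show ?thesis
  proof (rule that)
    show "P \<inter> {y. n0 \<bullet> y = h0} facet_of P"
      using facet_of_polyhedron_explicit[OF fin eq ab min] H(1) by (auto simp: n0_def h0_def)
    have "P \<subseteq> H" using H(1) by (subst eq) blast
    then show "P \<subseteq> {y. n0 \<bullet> y \<le> h0}" using H_eq(1) by simp
    show "h0 < n0 \<bullet> x" using H(2) H_eq(1) by auto
  qed (use H_eq(2) in simp_all)
qed

lemma polyhedron_obtain_inequalities:
  fixes P :: "'a::euclidean_space set"
  assumes "polyhedron P"
  obtains K where "finite K" "P = {y. \<forall>(a, b)\<in>K. a \<bullet> y \<le> b}"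
proof -
  obtain FF where FF: "finite FF" "P = \<Inter>FF" "\<And>H. H \<in> FF \<Longrightarrow> \<exists>a b. a \<noteq> 0 \<and> H = {x. a \<bullet> x \<le> b}"
    using assms unfolding polyhedron_def by blast
  then have "\<forall>H\<in>FF. \<exists>ab. H = {x. fst ab \<bullet> x \<le> snd ab}" by fastforce
  then obtain ab where ab: "\<And>H. H \<in> FF \<Longrightarrow> H = {x. fst (ab H) \<bullet> x \<le> snd (ab H)}"
    by (rule bchoice[THEN exE]) blast
  have "y \<in> H \<longleftrightarrow> fst (ab H) \<bullet> y \<le> snd (ab H)" if "H \<in> FF" for H y
    using ab[OF that] by blast
  then have "P = {y. \<forall>H\<in>FF. fst (ab H) \<bullet> y \<le> snd (ab H)}" using FF(2) by blast
  also have "\<dots> = {y. \<forall>(a, b)\<in>ab ` FF. a \<bullet> y \<le> b}" by (simp add: case_prod_beta)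
  finally have "P = {y. \<forall>(a, b)\<in>ab ` FF. a \<bullet> y \<le> b}" .
  then show ?thesis using that FF(1) by blast
qed

lemma convex_hull_affine_margin:
  fixes u w :: "'b::euclidean_space"
  assumes "finite V"
    and le: "\<And>v. v \<in> V \<Longrightarrow> u \<bullet> v \<le> D"
    and less: "\<And>v. v \<in> V \<Longrightarrow> 0 < \<beta> - w \<bullet> v \<Longrightarrow> u \<bullet> v < D"
  obtains \<alpha> where "\<alpha> > 0" "\<And>z. z \<in> convex hull V \<Longrightarrow> u \<bullet> z + \<alpha> * (\<beta> - w \<bullet> z) \<le> D"
proof -
  define S where "S = (\<lambda>v. (D - u \<bullet> v) / (\<beta> - w \<bullet> v)) ` {v \<in> V. 0 < \<beta> - w \<bullet> v}"
  define \<alpha> where "\<alpha> = Min (insert 1 S)"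
  have fin: "finite (insert 1 S)" using assms(1) by (simp add: S_def)
  have "\<alpha> > 0" unfolding \<alpha>_def using fin less by (subst Min_gr_iff) (auto simp: S_def)
  have vertex: "u \<bullet> v + \<alpha> * (\<beta> - w \<bullet> v) \<le> D" if v: "v \<in> V" for v
  proof (cases "0 < \<beta> - w \<bullet> v")
    case True
    then have "\<alpha> \<le> (D - u \<bullet> v) / (\<beta> - w \<bullet> v)"
      unfolding \<alpha>_def using fin v by (intro Min_le) (auto simp: S_def)
    then show ?thesis using True by (simp add: le_divide_eq)
  next
    case False
    then have "\<alpha> * (\<beta> - w \<bullet> v) \<le> 0" using \<open>\<alpha> > 0\<close> by (simp add: mult_nonneg_nonpos)
    then show ?thesis using le[OF v] by linarith
  qed
  have "convex {z. (u - \<alpha> *\<^sub>R w) \<bullet> z \<le> D - \<alpha> * \<beta>}" by (rule convex_halfspace_le)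
  moreover have "V \<subseteq> {z. (u - \<alpha> *\<^sub>R w) \<bullet> z \<le> D - \<alpha> * \<beta>}"
    using vertex by (auto simp: inner_diff_left algebra_simps)
  ultimately have "convex hull V \<subseteq> {z. (u - \<alpha> *\<^sub>R w) \<bullet> z \<le> D - \<alpha> * \<beta>}"
    by (rule hull_minimal[rotated])
  then show ?thesis
    using that[OF \<open>\<alpha> > 0\<close>] by (force simp: inner_diff_left algebra_simps)
qed

section \<open>Prolonging a diameter segment through a facet\<close>

text \<open>A segment ending at a relative interior point \<open>p\<close> of a facet can be prolonged beyond \<open>p\<close>
  inside the pyramid over the facet with any apex \<open>x\<close> beyond it: the line from \<open>x\<close> through the
  prolonged endpoint meets the facet hyperplane close to \<open>p\<close>.\<close>
lemma prolong_segment_into_pyramid: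
  fixes p q x :: "'a::euclidean_space"
  assumes p: "p \<in> rel_interior F" and aff: "affine hull F = {y. n \<bullet> y = h}"
    and q: "n \<bullet> q \<le> h" and x: "h < n \<bullet> x"
  obtains \<delta> where "\<delta> > 0" "p - \<delta> *\<^sub>R (q - p) \<in> convex hull (insert x F)"
proof -
  obtain r where r: "r > 0" "ball p r \<inter> affine hull F \<subseteq> F"
    using p mem_rel_interior_ball by blast
  have "p \<in> F" using p rel_interior_subset by blast
  then have "p \<in> affine hull F" by (rule hull_inc)
  then have np: "n \<bullet> p = h" using aff by simp
  define k where "k = (h - n \<bullet> q) / (n \<bullet> x - h)"
  define w where "w = (p - q) - k *\<^sub>R (x - p)"
  define f where "f \<delta> = p + (\<delta> / (1 - \<delta> * k)) *\<^sub>R w" for \<delta>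
  have k: "k \<ge> 0" "k * (n \<bullet> x - h) = h - n \<bullet> q" using q x by (simp_all add: k_def)
  have nw: "n \<bullet> w = 0" using k(2) np by (simp add: w_def inner_diff_right algebra_simps)
  have "(f \<longlongrightarrow> p + (0 / (1 - 0 * k)) *\<^sub>R w) (at_right 0)"
    unfolding f_def by (intro tendsto_intros) simp
  then have "eventually (\<lambda>\<delta>. dist (f \<delta>) p < r) (at_right 0)"
    using tendstoD[OF _ r(1)] by simp
  moreover have "((\<lambda>\<delta>. \<delta> * k) \<longlongrightarrow> 0 * k) (at_right 0)" by (intro tendsto_intros)
  then have "eventually (\<lambda>\<delta>. \<delta> * k < 1) (at_right 0)" by (rule order_tendstoD(2)) simp
  ultimately have "eventually (\<lambda>\<delta>. 0 < \<delta> \<and> \<delta> * k < 1 \<and> dist (f \<delta>) p < r) (at_right 0)"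
    using eventually_at_right_less[of "0::real"] by eventually_elim auto
  then obtain \<delta> where \<delta>: "0 < \<delta>" "\<delta> * k < 1" "dist (f \<delta>) p < r"
    using eventually_happens'[OF trivial_limit_at_right_real] by blast
  have "n \<bullet> f \<delta> = h" using nw np by (simp add: f_def inner_add_right)
  then have "f \<delta> \<in> F" using r(2) \<delta>(3) aff by (auto simp: dist_commute)
  moreover have "p - \<delta> *\<^sub>R (q - p) = (1 - \<delta> * k) *\<^sub>R f \<delta> + (\<delta> * k) *\<^sub>R x"
  proof -
    have "(1 - \<delta> * k) *\<^sub>R f \<delta> = (1 - \<delta> * k) *\<^sub>R p + \<delta> *\<^sub>R w"
      using \<delta>(2) by (simp add: f_def scaleR_add_right)
    then show ?thesis by (simp add: w_def algebra_simps)
  qed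
  moreover have "0 \<le> \<delta> * k" using \<delta>(1) k(1) by simp
  ultimately have "p - \<delta> *\<^sub>R (q - p) \<in> convex hull (insert x F)"
    using \<delta>(2) convexD[OF convex_convex_hull, of "f \<delta>" "insert x F" x]
    by (simp add: hull_inc)
  then show ?thesis using that \<delta>(1) by blast
qed

lemma lattice_complete_if_facet_diameter_segments:
  fixes L :: "'a::euclidean_space set" and P :: "'a set"
  assumes L: "is_lattice L" and P: "polytope P" "aff_dim P = int DIM('a)"
    and facets: "\<forall>F. F facet_of P \<longrightarrow>
      (\<exists>a b. diameter_segment L P a b \<and> (a \<in> rel_interior F \<or> b \<in> rel_interior F))"
  shows "lattice_complete L P"
  unfolding lattice_complete_def
proof
  assume "\<exists>C. convex_body C \<and> P \<subset> C \<and> lattice_diam L C = lattice_diam L P"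
  then obtain C where C: "convex_body C" "P \<subset> C" and diam: "lattice_diam L C = lattice_diam L P"
    by blast
  obtain x where x: "x \<in> C" "x \<notin> P" using C(2) by blast
  obtain F n h where F: "F facet_of P" "n \<noteq> 0" "P \<subseteq> {y. n \<bullet> y \<le> h}"
    "F = P \<inter> {y. n \<bullet> y = h}" "h < n \<bullet> x"
    using polyhedron_obtain_separating_facet[OF polytope_imp_polyhedron[OF P(1)] P(2) x(2)] .
  obtain p q where pq: "diameter_segment L P p q" and p: "p \<in> rel_interior F"
    using facets F(1) diameter_segment_commute[OF L] by blast
  have seg: "lattice_segment L p q" "closed_segment p q \<subseteq> P"
    and len: "lattice_length L p q = lattice_diam L P"
    using pq by (auto simp: diameter_segment_def)
  have D: "lattice_diam L P > 0" using lattice_diam_pos[OF L polytope_imp_convex_body[OF P]] .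
  obtain \<delta> where \<delta>: "\<delta> > 0" "p - \<delta> *\<^sub>R (q - p) \<in> convex hull (insert x F)"
    using prolong_segment_into_pyramid[OF p facet_affine_hull[OF P(2) F(1,2,4)]] F(3,5) seg(2)
    by blast
  have convC: "convex C" using C(1) by (simp add: convex_body_def)
  have "convex hull (insert x F) \<subseteq> C"
    using x(1) F(4) C(2) convC by (intro hull_minimal) auto
  moreover have "q \<in> C" using seg(2) C(2) by auto
  moreover have "p - \<delta> *\<^sub>R (q - p) = q - (1 + \<delta>) *\<^sub>R (q - p)" by (simp add: algebra_simps)
  ultimately have sub: "closed_segment (q - (1 + \<delta>) *\<^sub>R (q - p)) q \<subseteq> C"
    using \<delta>(2) convC by (metis closed_segment_subset subsetD)
  have "(1 + \<delta>) * lattice_diam L P = lattice_length L (q - (1 + \<delta>) *\<^sub>R (q - p)) q"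
    using lattice_length_stretch(2)[OF L seg(1)] \<delta>(1) len by simp
  also have "\<dots> \<le> lattice_diam L C"
    using C(1) compact_imp_bounded lattice_length_stretch(1)[OF L seg(1)] \<delta>(1) sub
    by (intro lattice_length_le_diam[OF L]) (auto simp: convex_body_def)
  finally show False using diam D \<delta>(1) by simp
qed

section \<open>Thin caps over a facet\<close>

lemma eventually_at_right_0_mult_le:
  fixes A B :: real
  assumes "0 < B"
  shows "eventually (\<lambda>\<epsilon>. \<epsilon> * A \<le> B) (at_right 0)"
proof -
  have "((\<lambda>\<epsilon>. \<epsilon> * A) \<longlongrightarrow> 0 * A) (at_right 0)" by (intro tendsto_intros)
  from order_tendstoD(2)[OF this] have "eventually (\<lambda>\<epsilon>. \<epsilon> * A < B) (at_right 0)"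
    using assms by simp
  then show ?thesis by (rule eventually_mono) simp
qed

text \<open>The constraints that are
  \<open>loose\<close> at \<open>c\<close> are exactly those not defining \<open>F\<close>; a cap is \<open>thin\<close> when its apex keeps half of
  the slack at \<open>c\<close> of each of them.\<close>
locale facet_cap =
  fixes K :: "('a::euclidean_space \<times> real) set" and P F :: "'a set" and n c :: 'a and h :: real
  assumes finite_K: "finite K"
    and P_eq: "P = {y. \<forall>(a, b)\<in>K. a \<bullet> y \<le> b}"
    and bounded_P: "bounded P"
    and n_nonzero: "n \<noteq> 0"
    and P_subset: "P \<subseteq> {y. n \<bullet> y \<le> h}"
    and F_eq: "F = P \<inter> {y. n \<bullet> y = h}"
    and affine_hull_F: "affine hull F = {y. n \<bullet> y = h}"
    and c_rel_interior: "c \<in> rel_interior F"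
begin

definition loose :: "('a \<times> real) set" where
  "loose = {(a, b) \<in> K. a \<bullet> c < b}"

definition height :: "'a \<Rightarrow> real" where
  "height y = n \<bullet> y - h"

definition apex :: "real \<Rightarrow> 'a" where
  "apex \<epsilon> = c + \<epsilon> *\<^sub>R n"

definition cap :: "real \<Rightarrow> 'a set" where
  "cap \<epsilon> = convex hull (insert (apex \<epsilon>) P)"

definition thin :: "real \<Rightarrow> bool" where
  "thin \<epsilon> \<longleftrightarrow> 0 < \<epsilon> \<and> (\<forall>(a, b)\<in>loose. \<epsilon> * \<bar>a \<bullet> n\<bar> \<le> (b - a \<bullet> c) / 2)"

lemma finite_loose: "finite loose"
  using finite_K by (rule finite_subset[rotated]) (auto simp: loose_def)

lemma mem_P_iff: "y \<in> P \<longleftrightarrow> (\<forall>ab\<in>K. fst ab \<bullet> y \<le> snd ab)"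
  using P_eq by (auto simp: case_prod_beta)

lemma convex_P: "convex P"
proof -
  have "P = (\<Inter>ab\<in>K. {y. fst ab \<bullet> y \<le> snd ab})" using mem_P_iff by auto
  then show ?thesis by (simp add: convex_INT convex_halfspace_le)
qed

lemma F_subset_P: "F \<subseteq> P"
  using F_eq by blast

lemma c_in_F: "c \<in> F"
  using c_rel_interior rel_interior_subset by blast

lemma height_c: "height c = 0"
  using c_in_F F_eq by (simp add: height_def)

lemma height_le_0: "y \<in> P \<Longrightarrow> height y \<le> 0"
  using P_subset by (auto simp: height_def)

lemma height_apex: "height (apex \<epsilon>) = \<epsilon> * (n \<bullet> n)"
  using height_c by (simp add: height_def apex_def inner_add_right)

lemma height_apex_pos: "0 < \<epsilon> \<Longrightarrow> 0 < height (apex \<epsilon>)"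
  using n_nonzero by (simp add: height_apex)

lemma height_add_scaleR: "height (y + t *\<^sub>R v) = height y + t * (n \<bullet> v)"
  by (simp add: height_def inner_add_right)

lemma mem_F_iff: "y \<in> F \<longleftrightarrow> y \<in> P \<and> height y = 0"
  by (simp add: F_eq height_def)

text \<open>A constraint tight at \<open>c\<close> but not on the whole hyperplane would cut \<open>F\<close> near its relative
  interior point \<open>c\<close>.\<close>
lemma tight_constraint_on_hyperplane:
  assumes ab: "(a, b) \<in> K" "(a, b) \<notin> loose" and y: "n \<bullet> y = h"
  shows "a \<bullet> y = b"
proof -
  have acb: "a \<bullet> c = b" using ab c_in_F F_eq P_eq by (force simp: loose_def)
  obtain r where r: "r > 0" "ball c r \<inter> affine hull F \<subseteq> F"
    using c_rel_interior mem_rel_interior_ball by blast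
  have "c + s *\<^sub>R (y - c) \<in> P" if "\<bar>s\<bar> * norm (y - c) < r" for s
  proof -
    have "n \<bullet> (c + s *\<^sub>R (y - c)) = h"
      using y height_c by (simp add: height_def inner_add_right inner_diff_right algebra_simps)
    moreover have "c + s *\<^sub>R (y - c) \<in> ball c r" using that by (simp add: dist_norm)
    ultimately show ?thesis using r(2) affine_hull_F F_subset_P by blast
  qed
  then have bound: "s * (a \<bullet> (y - c)) \<le> 0" if "\<bar>s\<bar> * norm (y - c) < r" for s
    using that ab(1) acb P_eq by (fastforce simp: inner_add_right)
  define s where "s = r / (2 * norm (y - c) + 1)"
  have "0 < 2 * norm (y - c) + 1" by (simp add: add_nonneg_pos)
  then have "s > 0" "s * (2 * norm (y - c) + 1) = r" using r(1) by (simp_all add: s_def)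
  then have "s > 0" "s * norm (y - c) < r" by (auto simp: algebra_simps add_pos_nonneg)
  then have "s * (a \<bullet> (y - c)) \<le> 0" "- s * (a \<bullet> (y - c)) \<le> 0"
    using bound[of s] bound[of "- s"] by auto
  then have "a \<bullet> (y - c) = 0" using \<open>s > 0\<close> by (simp add: mult_le_0_iff zero_le_mult_iff)
  then show ?thesis using acb by (simp add: inner_diff_right)
qed

lemma mem_F_if_loose_constraints:
  assumes "n \<bullet> y = h" "\<And>a b. (a, b) \<in> loose \<Longrightarrow> a \<bullet> y \<le> b"
  shows "y \<in> F"
  using assms tight_constraint_on_hyperplane by (force simp: F_eq P_eq)

lemma mem_rel_interior_F_if_loose_strict:
  assumes p: "p \<in> F" and strict: "\<And>a b. (a, b) \<in> loose \<Longrightarrow> a \<bullet> p < b"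
  shows "p \<in> rel_interior F"
proof -
  define r where "r = Min (insert 1 ((\<lambda>(a, b). (b - a \<bullet> p) / (norm a + 1)) ` loose))"
  have fin: "finite (insert 1 ((\<lambda>(a, b). (b - a \<bullet> p) / (norm a + 1)) ` loose))"
    using finite_loose by simp
  have "r > 0" unfolding r_def using fin strict
    by (subst Min_gr_iff) (auto simp: add_nonneg_pos)
  have r_le: "(norm a + 1) * r \<le> b - a \<bullet> p" if "(a, b) \<in> loose" for a b
  proof -
    have "r \<le> (b - a \<bullet> p) / (norm a + 1)" unfolding r_def using fin that by (intro Min_le) force+
    then show ?thesis by (simp add: le_divide_eq add_nonneg_pos mult.commute)
  qed
  have "ball p r \<inter> affine hull F \<subseteq> F"
  proof
    fix y assume y: "y \<in> ball p r \<inter> affine hull F"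
    have "a \<bullet> y \<le> b" if ab: "(a, b) \<in> loose" for a b
    proof -
      have "a \<bullet> y - a \<bullet> p \<le> norm a * norm (y - p)"
        using norm_cauchy_schwarz[of a "y - p"] by (simp add: inner_diff_right)
      also have "\<dots> \<le> (norm a + 1) * r"
        using y \<open>r > 0\<close> by (intro mult_mono) (auto simp: dist_norm norm_minus_commute)
      finally show ?thesis using r_le[OF ab] by simp
    qed
    then show "y \<in> F" using y affine_hull_F mem_F_if_loose_constraints by auto
  qed
  then show ?thesis using p \<open>r > 0\<close> mem_rel_interior_ball by blast
qed

lemma apex_loose_constraint:
  assumes "thin \<epsilon>" "(a, b) \<in> loose"
  shows "a \<bullet> apex \<epsilon> \<le> (a \<bullet> c + b) / 2"
proof -
  have "\<epsilon> * (a \<bullet> n) \<le> \<epsilon> * \<bar>a \<bullet> n\<bar>" using assms(1) by (simp add: thin_def)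
  also have "\<dots> \<le> (b - a \<bullet> c) / 2" using assms by (auto simp: thin_def)
  finally show ?thesis by (simp add: apex_def inner_add_right)
qed

lemma eventually_thin: "eventually thin (at_right 0)"
proof -
  have "\<forall>ab\<in>loose. eventually (\<lambda>\<epsilon>. \<epsilon> * \<bar>fst ab \<bullet> n\<bar> \<le> (snd ab - fst ab \<bullet> c) / 2) (at_right 0)"
  proof
    fix ab assume "ab \<in> loose"
    then have "0 < (snd ab - fst ab \<bullet> c) / 2" by (auto simp: loose_def)
    then show "eventually (\<lambda>\<epsilon>. \<epsilon> * \<bar>fst ab \<bullet> n\<bar> \<le> (snd ab - fst ab \<bullet> c) / 2) (at_right 0)"
      by (rule eventually_at_right_0_mult_le)
  qed
  then have "eventually (\<lambda>\<epsilon>. \<forall>ab\<in>loose. \<epsilon> * \<bar>fst ab \<bullet> n\<bar> \<le> (snd ab - fst ab \<bullet> c) / 2) (at_right 0)"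
    by (rule eventually_ball_finite[OF finite_loose])
  then show ?thesis
    using eventually_at_right_less[of "0::real"] unfolding thin_def
    by eventually_elim (simp add: case_prod_beta)
qed

lemma inner_n_diff: "n \<bullet> (x - y) = height x - height y"
  by (simp add: height_def inner_diff_right)

lemma height_apex_gap:
  assumes "thin \<epsilon>" "p \<in> P"
  shows "0 < height (apex \<epsilon>) - height p"
proof -
  have "0 < height (apex \<epsilon>)" using assms(1) height_apex_pos by (simp add: thin_def)
  then show ?thesis using height_le_0[OF assms(2)] by linarith
qed

lemma cap_obtain_segment_point:
  assumes "y \<in> cap \<epsilon>"
  obtains p t where "p \<in> P" "0 \<le> t" "t \<le> 1" "y = p + t *\<^sub>R (apex \<epsilon> - p)"
proof -
  have "P \<noteq> {}" using c_in_F F_subset_P by blast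
  then obtain p where "p \<in> convex hull P" "y \<in> closed_segment (apex \<epsilon>) p"
    using assms unfolding cap_def convex_hull_insert_segments by auto
  moreover have "convex hull P = P" using convex_P by (rule convex_hull_eq[THEN iffD2])
  ultimately obtain u where "p \<in> P" "0 \<le> u" "u \<le> 1" "y = (1 - u) *\<^sub>R apex \<epsilon> + u *\<^sub>R p"
    by (auto simp: closed_segment_def)
  moreover have "(1 - u) *\<^sub>R apex \<epsilon> + u *\<^sub>R p = p + (1 - u) *\<^sub>R (apex \<epsilon> - p)"
    by (simp add: algebra_simps)
  ultimately show ?thesis using that[of p "1 - u"] by simp
qed

lemma segment_to_apex_meets_F:
  assumes thin: "thin \<epsilon>" and p: "p \<in> P"
  defines "s \<equiv> height p / (height p - height (apex \<epsilon>))"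
  shows "0 \<le> s" "s < 1" "p + s *\<^sub>R (apex \<epsilon> - p) \<in> F"
proof -
  have H: "0 < height (apex \<epsilon>)" using thin height_apex_pos by (simp add: thin_def)
  have hp: "height p \<le> 0" using p height_le_0 by simp
  show "0 \<le> s" "s < 1" using H hp by (auto simp: s_def divide_simps)
  have "s * (height (apex \<epsilon>) - height p) = - height p"
    using H hp by (simp add: s_def field_simps)
  then have "height (p + s *\<^sub>R (apex \<epsilon> - p)) = 0"
    by (simp add: height_add_scaleR inner_n_diff)
  moreover have "a \<bullet> (p + s *\<^sub>R (apex \<epsilon> - p)) \<le> b" if ab: "(a, b) \<in> loose" for a b
  proof -
    have "a \<bullet> p \<le> b" using ab p P_eq by (auto simp: loose_def)
    moreover have "a \<bullet> apex \<epsilon> \<le> b"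
      using apex_loose_constraint[OF thin ab] ab by (auto simp: loose_def)
    ultimately have "(1 - s) * (a \<bullet> p) + s * (a \<bullet> apex \<epsilon>) \<le> (1 - s) * b + s * b"
      using \<open>0 \<le> s\<close> \<open>s < 1\<close> by (intro add_mono mult_left_mono) auto
    then show ?thesis by (simp add: inner_add_right inner_diff_right algebra_simps)
  qed
  ultimately show "p + s *\<^sub>R (apex \<epsilon> - p) \<in> F"
    using mem_F_if_loose_constraints by (simp add: height_def)
qed

lemma cap_height_le:
  assumes "0 < \<epsilon>" "y \<in> cap \<epsilon>"
  shows "height y \<le> height (apex \<epsilon>)"
proof -
  obtain p t where p: "p \<in> P" "0 \<le> t" "t \<le> 1" "y = p + t *\<^sub>R (apex \<epsilon> - p)"
    using cap_obtain_segment_point[OF assms(2)] .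
  have "0 \<le> height (apex \<epsilon>) - height p"
    using height_apex_pos[OF assms(1)] height_le_0[OF p(1)] by simp
  then have "t * (height (apex \<epsilon>) - height p) \<le> height (apex \<epsilon>) - height p"
    using p(2,3) by (rule mult_left_le_one_le)
  then show ?thesis using p(4) by (simp add: height_add_scaleR inner_n_diff)
qed

lemma cap_below_in_P:
  assumes thin: "thin \<epsilon>" and y: "y \<in> cap \<epsilon>" "height y \<le> 0"
  shows "y \<in> P"
proof -
  obtain p t where p: "p \<in> P" "0 \<le> t" "t \<le> 1" "y = p + t *\<^sub>R (apex \<epsilon> - p)"
    using cap_obtain_segment_point[OF y(1)] .
  define s where "s = height p / (height p - height (apex \<epsilon>))"
  have s: "0 \<le> s" "s < 1" "p + s *\<^sub>R (apex \<epsilon> - p) \<in> F"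
    using segment_to_apex_meets_F[OF thin p(1)] by (simp_all add: s_def)
  have E: "0 < height (apex \<epsilon>) - height p" using height_apex_gap[OF thin p(1)] .
  have "height y = height p + t * (height (apex \<epsilon>) - height p)"
    using p(4) by (simp add: height_add_scaleR inner_n_diff)
  also have "\<dots> = (t - s) * (height (apex \<epsilon>) - height p)"
    using E by (simp add: s_def field_simps)
  finally have "height y = (t - s) * (height (apex \<epsilon>) - height p)" .
  then have "t \<le> s" using y(2) E by (simp add: mult_le_0_iff)
  show ?thesis
  proof (cases "s = 0")
    case True
    then show ?thesis using \<open>t \<le> s\<close> p by simp
  next
    case False
    then have "y = (1 - t / s) *\<^sub>R p + (t / s) *\<^sub>R (p + s *\<^sub>R (apex \<epsilon> - p))"
      by (simp add: p(4) algebra_simps)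
    moreover have "0 \<le> t / s" "t / s \<le> 1" using \<open>t \<le> s\<close> p(2) s(1) False by auto
    ultimately show ?thesis
      using convexD_alt[OF convex_P p(1)] s(3) F_subset_P by (metis subsetD)
  qed
qed

lemma cap_above_in_pyramid:
  assumes thin: "thin \<epsilon>" and y: "y \<in> cap \<epsilon>" "0 < height y"
  obtains f where "f \<in> F"
    "y = (1 - height y / height (apex \<epsilon>)) *\<^sub>R f + (height y / height (apex \<epsilon>)) *\<^sub>R apex \<epsilon>"
proof -
  obtain p t where p: "p \<in> P" "0 \<le> t" "t \<le> 1" "y = p + t *\<^sub>R (apex \<epsilon> - p)"
    using cap_obtain_segment_point[OF y(1)] .
  define s where "s = height p / (height p - height (apex \<epsilon>))"
  have s: "0 \<le> s" "s < 1" "p + s *\<^sub>R (apex \<epsilon> - p) \<in> F"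
    using segment_to_apex_meets_F[OF thin p(1)] by (simp_all add: s_def)
  define E where "E = height (apex \<epsilon>) - height p"
  have E: "0 < E" using height_apex_gap[OF thin p(1)] by (simp add: E_def)
  have "height y = height p + t * E"
    using p(4) by (simp add: height_add_scaleR inner_n_diff E_def)
  moreover have sE: "s * E = - height p" using E by (simp add: s_def E_def field_simps)
  ultimately have hy: "height y = (t - s) * E" by (simp add: algebra_simps)
  have hx: "height (apex \<epsilon>) = (1 - s) * E" using sE by (simp add: E_def algebra_simps)
  define f where "f = p + s *\<^sub>R (apex \<epsilon> - p)"
  define \<tau> where "\<tau> = (t - s) / (1 - s)"
  have "\<tau> = height y / height (apex \<epsilon>)" using E by (simp add: hy hx \<tau>_def)
  moreover have "(1 - \<tau>) *\<^sub>R f + \<tau> *\<^sub>R apex \<epsilon> = f + (\<tau> * (1 - s)) *\<^sub>R (apex \<epsilon> - p)"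
    by (simp add: f_def algebra_simps)
  moreover have "\<tau> * (1 - s) = t - s" using s(2) by (simp add: \<tau>_def)
  moreover have "f + (t - s) *\<^sub>R (apex \<epsilon> - p) = y" by (simp add: f_def p(4) algebra_simps)
  ultimately show ?thesis using that s(3) by (simp add: f_def)
qed

text \<open>The pair \<open>(0, 1)\<close> stands for the trivial constraint \<open>0 \<bullet> y \<le> 1\<close>, so that the least slack at
  a point is at most \<open>1\<close>.\<close>
definition slack_forms :: "('a \<times> real) set" where
  "slack_forms = insert (0, 1) loose"

definition slack :: "'a \<times> real \<Rightarrow> 'a \<Rightarrow> real" where
  "slack j y = snd j - fst j \<bullet> y"

definition chords_to_F :: "'a \<Rightarrow> 'a \<times> real \<Rightarrow> ('a \<times> real) set" where
  "chords_to_F g j =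
     {(p, t). p \<in> F \<and> 0 \<le> t \<and> p - t *\<^sub>R g \<in> P \<and> (\<forall>i\<in>slack_forms. slack j p \<le> slack i p)}"

lemma finite_slack_forms: "finite slack_forms"
  using finite_loose by (simp add: slack_forms_def)

lemma slack_nonneg: "j \<in> slack_forms \<Longrightarrow> y \<in> P \<Longrightarrow> 0 \<le> slack j y"
  using P_eq by (auto simp: slack_forms_def loose_def slack_def)

lemma obtain_least_slack:
  obtains j where "j \<in> slack_forms" "\<And>i. i \<in> slack_forms \<Longrightarrow> slack j p \<le> slack i p"
proof -
  have "finite ((\<lambda>i. slack i p) ` slack_forms)" "(\<lambda>i. slack i p) ` slack_forms \<noteq> {}"
    using finite_slack_forms by (auto simp: slack_forms_def)
  then have "Min ((\<lambda>i. slack i p) ` slack_forms) \<in> (\<lambda>i. slack i p) ` slack_forms" by (rule Min_in)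
  then obtain j where "j \<in> slack_forms" "slack j p = Min ((\<lambda>i. slack i p) ` slack_forms)" by auto
  then show ?thesis using that finite_slack_forms by simp
qed

lemma rel_interior_if_least_slack_pos:
  assumes "p \<in> F" and least: "\<And>i. i \<in> slack_forms \<Longrightarrow> slack j p \<le> slack i p"
    and "0 < slack j p"
  shows "p \<in> rel_interior F"
proof (rule mem_rel_interior_F_if_loose_strict[OF assms(1)])
  fix a b assume "(a, b) \<in> loose"
  then have "slack j p \<le> slack (a, b) p" using least by (simp add: slack_forms_def)
  then show "a \<bullet> p < b" using assms(3) by (simp add: slack_def)
qed

lemma chords_to_F_eq:
  "chords_to_F g j =
     (\<Inter>ab\<in>K. {z. (fst ab, 0) \<bullet> z \<le> snd ab}) \<inter> {z. (n, 0) \<bullet> z \<le> h} \<inter> {z. (- n, 0) \<bullet> z \<le> - h}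
     \<inter> {z. (0, - 1) \<bullet> z \<le> 0} \<inter> (\<Inter>ab\<in>K. {z. (fst ab, - (fst ab \<bullet> g)) \<bullet> z \<le> snd ab})
     \<inter> (\<Inter>i\<in>slack_forms. {z. (fst i - fst j, 0) \<bullet> z \<le> snd i - snd j})"
  by (auto simp: chords_to_F_def mem_F_iff mem_P_iff height_def slack_def inner_diff_left
      inner_diff_right algebra_simps; drule (1) bspec; simp)

lemma polytope_chords_to_F:
  assumes "chords_le P g D"
  shows "polytope (chords_to_F g j)"
proof -
  have "polyhedron (chords_to_F g j)"
    unfolding chords_to_F_eq
    by (intro polyhedron_Int polyhedron_Inter finite_imageI finite_K finite_slack_forms)
      (auto intro: polyhedron_halfspace_le)
  moreover have "chords_to_F g j \<subseteq> F \<times> {0..D}"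
  proof
    fix z assume "z \<in> chords_to_F g j"
    then obtain p t where z: "z = (p, t)" "p \<in> F" "0 \<le> t" "p - t *\<^sub>R g \<in> P"
      by (auto simp: chords_to_F_def)
    then have "t \<le> D"
      using assms F_subset_P unfolding chords_le_def by (metis diff_add_cancel subsetD)
    then show "z \<in> F \<times> {0..D}" using z by simp
  qed
  then have "bounded (chords_to_F g j)"
    using bounded_P F_subset_P by (metis bounded_Times bounded_closed_interval bounded_subset)
  ultimately show ?thesis by (simp add: polytope_eq_bounded_polyhedron)
qed

text \<open>On the chords of \<open>P\<close> ending at points of \<open>F\<close> whose least slack is attained by \<open>j\<close>, this
  slack is an affine function, and on the vertices of this polytope a positive slack means a
  relative interior endpoint, hence a chord shorter than \<open>D\<close>.\<close>
lemma chords_to_F_margin_for: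
  assumes short: "chords_le P g D"
    and top: "\<And>p. p \<in> P \<Longrightarrow> p + D *\<^sub>R g \<in> P \<Longrightarrow> p + D *\<^sub>R g \<notin> rel_interior F"
  obtains \<alpha> where "\<alpha> > 0" "\<And>p t. (p, t) \<in> chords_to_F g j \<Longrightarrow> t + \<alpha> * slack j p \<le> D"
proof -
  have le: "t \<le> D" if "(p, t) \<in> chords_to_F g j" for p t
  proof -
    have "p - t *\<^sub>R g \<in> P" "(p - t *\<^sub>R g) + t *\<^sub>R g \<in> P" "0 \<le> t"
      using that F_subset_P by (auto simp: chords_to_F_def)
    then show ?thesis using short unfolding chords_le_def by simp
  qed
  have less: "t < D" if "(p, t) \<in> chords_to_F g j" "0 < slack j p" for p t
  proof -
    have "p \<in> rel_interior F"
      using that(1) rel_interior_if_least_slack_pos[OF _ _ that(2)] by (simp add: chords_to_F_def)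
    moreover have "p - t *\<^sub>R g \<in> P" "p \<in> P" using that F_subset_P by (auto simp: chords_to_F_def)
    ultimately have "t \<noteq> D" using top[of "p - t *\<^sub>R g"] by auto
    then show ?thesis using le[OF that(1)] by simp
  qed
  obtain V where V: "finite V" "chords_to_F g j = convex hull V"
    using polytope_chords_to_F[OF short] unfolding polytope_def by blast
  have V_sub: "V \<subseteq> chords_to_F g j" unfolding V(2) by (rule hull_subset)
  have "(0, 1) \<bullet> v \<le> D" "0 < snd j - (fst j, 0) \<bullet> v \<Longrightarrow> (0, 1) \<bullet> v < D" if "v \<in> V" for v
  proof -
    obtain p t where v: "v = (p, t)" by fastforce
    then have pt: "(p, t) \<in> chords_to_F g j" using V_sub that by blast
    show "(0, 1) \<bullet> v \<le> D" using le[OF pt] v by simp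
    show "(0, 1) \<bullet> v < D" if "0 < snd j - (fst j, 0) \<bullet> v"
      using less[OF pt] that v by (simp add: slack_def)
  qed
  then obtain \<alpha> where "\<alpha> > 0"
    and \<alpha>: "\<And>z. z \<in> convex hull V \<Longrightarrow> (0, 1) \<bullet> z + \<alpha> * (snd j - (fst j, 0) \<bullet> z) \<le> D"
    using convex_hull_affine_margin[OF V(1)] by blast
  have "t + \<alpha> * slack j p \<le> D" if "(p, t) \<in> chords_to_F g j" for p t
    using \<alpha>[of "(p, t)"] that V(2) by (simp add: slack_def)
  with \<open>\<alpha> > 0\<close> show ?thesis by (rule that)
qed

lemma chords_to_F_margin:
  assumes short: "chords_le P g D"
    and top: "\<And>p. p \<in> P \<Longrightarrow> p + D *\<^sub>R g \<in> P \<Longrightarrow> p + D *\<^sub>R g \<notin> rel_interior F"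
  obtains \<alpha> where "\<alpha> > 0"
    "\<And>j p t. j \<in> slack_forms \<Longrightarrow> (p, t) \<in> chords_to_F g j \<Longrightarrow> t + \<alpha> * slack j p \<le> D"
proof -
  have "\<exists>\<alpha>>0. \<forall>p t. (p, t) \<in> chords_to_F g j \<longrightarrow> t + \<alpha> * slack j p \<le> D" for j
  proof (rule chords_to_F_margin_for[OF short top, where j = j])
    fix \<alpha> :: real
    assume "0 < \<alpha>" "\<And>p t. (p, t) \<in> chords_to_F g j \<Longrightarrow> t + \<alpha> * slack j p \<le> D"
    then show ?thesis by auto
  qed
  then obtain \<alpha> where \<alpha>: "\<And>j. \<alpha> j > 0"
    "\<And>j p t. (p, t) \<in> chords_to_F g j \<Longrightarrow> t + \<alpha> j * slack j p \<le> D"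
    using choice[of "\<lambda>j \<alpha>. \<alpha> > 0 \<and> (\<forall>p t. (p, t) \<in> chords_to_F g j \<longrightarrow> t + \<alpha> * slack j p \<le> D)"]
    by blast
  define \<alpha>0 where "\<alpha>0 = Min (\<alpha> ` slack_forms)"
  have "\<alpha>0 > 0" unfolding \<alpha>0_def using finite_slack_forms \<alpha>(1)
    by (subst Min_gr_iff) (auto simp: slack_forms_def)
  moreover have "t + \<alpha>0 * slack j p \<le> D" if "j \<in> slack_forms" "(p, t) \<in> chords_to_F g j" for j p t
  proof -
    have "\<alpha>0 \<le> \<alpha> j" unfolding \<alpha>0_def using finite_slack_forms that(1) by simp
    moreover have "p \<in> P" using that(2) F_subset_P by (auto simp: chords_to_F_def)
    then have "0 \<le> slack j p" using slack_nonneg[OF that(1)] by blast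
    ultimately have "\<alpha>0 * slack j p \<le> \<alpha> j * slack j p" by (rule mult_right_mono)
    then show ?thesis using \<alpha>(2)[OF that(2)] by simp
  qed
  ultimately show ?thesis using that by blast
qed

lemma pyramid_loose_constraint:
  assumes thin: "thin \<epsilon>" and f: "f \<in> F" and \<tau>: "0 \<le> \<tau>" "\<tau> \<le> 1" and ab: "(a, b) \<in> loose"
  shows "a \<bullet> ((1 - \<tau>) *\<^sub>R f + \<tau> *\<^sub>R apex \<epsilon>) \<le> b - \<tau> * ((b - a \<bullet> c) / 2)"
proof -
  have "a \<bullet> f \<le> b" using f F_subset_P ab P_eq by (auto simp: loose_def)
  then have "(1 - \<tau>) * (a \<bullet> f) + \<tau> * (a \<bullet> apex \<epsilon>) \<le> (1 - \<tau>) * b + \<tau> * ((a \<bullet> c + b) / 2)"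
    using apex_loose_constraint[OF thin ab] \<tau> by (intro add_mono mult_left_mono) auto
  also have "\<dots> = b - \<tau> * ((b - a \<bullet> c) / 2)" by (simp add: field_simps)
  finally show ?thesis by (simp add: inner_add_right)
qed

text \<open>Climbing in direction \<open>g\<close> costs height, so the part of a chord above \<open>F\<close> stays in the low
  part of the pyramid, where every loose constraint keeps most of its slack.\<close>
lemma cap_chord_above_F_le:
  assumes thin: "thin \<epsilon>" and gn: "0 < g \<bullet> n" and \<alpha>: "0 < \<alpha>"
    and low: "\<epsilon> * (n \<bullet> n) \<le> \<alpha> * (g \<bullet> n)"
    and room: "\<And>a b. (a, b) \<in> loose \<Longrightarrow> \<epsilon> * (n \<bullet> n) * (1 / \<alpha> + \<bar>a \<bullet> g\<bar>) \<le> (g \<bullet> n) * (b - a \<bullet> c) / 2"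
    and p: "p \<in> F" and t: "0 \<le> t" "p + t *\<^sub>R g \<in> cap \<epsilon>" and j: "j \<in> slack_forms"
  shows "t \<le> \<alpha> * slack j p"
proof (cases "t = 0")
  case True
  then show ?thesis using slack_nonneg[OF j] p F_subset_P \<alpha> by auto
next
  case False
  have e: "0 < \<epsilon>" using thin by (simp add: thin_def)
  have N: "0 < \<epsilon> * (n \<bullet> n)" using e n_nonzero by simp
  have "height p = 0" using p by (simp add: mem_F_iff)
  then have hy: "height (p + t *\<^sub>R g) = t * (g \<bullet> n)" by (simp add: height_add_scaleR inner_commute)
  then have "0 < height (p + t *\<^sub>R g)" using t(1) False gn by simp
  define \<tau> where "\<tau> = t * (g \<bullet> n) / (\<epsilon> * (n \<bullet> n))"
  obtain f where f: "f \<in> F" "p + t *\<^sub>R g = (1 - \<tau>) *\<^sub>R f + \<tau> *\<^sub>R apex \<epsilon>"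
    using cap_above_in_pyramid[OF thin t(2) \<open>0 < height _\<close>] by (metis hy height_apex \<tau>_def)
  have "\<tau> \<le> 1" using cap_height_le[OF e t(2)] N by (simp add: hy height_apex \<tau>_def)
  have "0 \<le> \<tau>" using t(1) gn N by (simp add: \<tau>_def)
  show ?thesis
  proof (cases "j = (0, 1)")
    case True
    have "t * (g \<bullet> n) \<le> \<alpha> * (g \<bullet> n)"
      using cap_height_le[OF e t(2)] low by (simp add: hy height_apex)
    then show ?thesis using True gn by (simp add: slack_def)
  next
    case False
    then have "j \<in> loose" using j by (simp add: slack_forms_def)
    moreover obtain a b where "j = (a, b)" by fastforce
    ultimately have ab: "j = (a, b)" "(a, b) \<in> loose" by simp_all
    have "a \<bullet> p + t * (a \<bullet> g) = a \<bullet> ((1 - \<tau>) *\<^sub>R f + \<tau> *\<^sub>R apex \<epsilon>)"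
      using arg_cong[OF f(2), of "inner a"] by (simp add: inner_add_right)
    also have "\<dots> \<le> b - \<tau> * ((b - a \<bullet> c) / 2)"
      using pyramid_loose_constraint[OF thin f(1) \<open>0 \<le> \<tau>\<close> \<open>\<tau> \<le> 1\<close> ab(2)] .
    finally have "t * (a \<bullet> g) + \<tau> * ((b - a \<bullet> c) / 2) \<le> b - a \<bullet> p" by simp
    moreover have "t * (1 / \<alpha>) + t * \<bar>a \<bullet> g\<bar> \<le> \<tau> * ((b - a \<bullet> c) / 2)"
    proof -
      have "t * (\<epsilon> * (n \<bullet> n) * (1 / \<alpha> + \<bar>a \<bullet> g\<bar>)) \<le> t * ((g \<bullet> n) * (b - a \<bullet> c) / 2)"
        using room[OF ab(2)] t(1) by (rule mult_left_mono)
      then show ?thesis using N by (simp add: \<tau>_def field_simps)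
    qed
    moreover have "0 \<le> t * (a \<bullet> g) + t * \<bar>a \<bullet> g\<bar>"
      using t(1) by (simp add: abs_if mult_nonneg_nonneg)
    ultimately have "t * (1 / \<alpha>) \<le> b - a \<bullet> p" by linarith
    then show ?thesis using \<alpha> ab(1) by (simp add: slack_def field_simps mult.commute)
  qed
qed

text \<open>A chord crossing the hyperplane of \<open>F\<close> splits there into a chord of \<open>P\<close>, which keeps the
  margin of \<open>chords_to_F_margin\<close> to \<open>D\<close>, and a part inside the pyramid, which the margin absorbs.\<close>
lemma cap_crossing_chord_le:
  assumes thin: "thin \<epsilon>" and gn: "0 < g \<bullet> n" and \<alpha>: "0 < \<alpha>"
    and margin: "\<And>j p t. j \<in> slack_forms \<Longrightarrow> (p, t) \<in> chords_to_F g j \<Longrightarrow> t + \<alpha> * slack j p \<le> D"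
    and low: "\<epsilon> * (n \<bullet> n) \<le> \<alpha> * (g \<bullet> n)"
    and room: "\<And>a b. (a, b) \<in> loose \<Longrightarrow> \<epsilon> * (n \<bullet> n) * (1 / \<alpha> + \<bar>a \<bullet> g\<bar>) \<le> (g \<bullet> n) * (b - a \<bullet> c) / 2"
    and q: "q \<in> cap \<epsilon>" "q + t *\<^sub>R g \<in> cap \<epsilon>"
    and cross: "height q < 0" "0 < height (q + t *\<^sub>R g)"
  shows "t \<le> D"
proof -
  define t1 where "t1 = - height q / (g \<bullet> n)"
  have t1: "0 < t1" "t1 < t" "t1 * (g \<bullet> n) = - height q"
    using cross gn by (auto simp: t1_def field_simps height_add_scaleR inner_commute)
  define p where "p = q + t1 *\<^sub>R g"
  have "t \<noteq> 0" using t1 by simp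
  then have "p = (1 - t1 / t) *\<^sub>R q + (t1 / t) *\<^sub>R (q + t *\<^sub>R g)"
    by (simp add: p_def algebra_simps)
  then have "p \<in> closed_segment q (q + t *\<^sub>R g)"
    using t1 unfolding closed_segment_def by (intro CollectI exI[of _ "t1 / t"]) simp
  then have "p \<in> cap \<epsilon>"
    using q convex_convex_hull closed_segment_subset unfolding cap_def by blast
  moreover have "height p = 0" using t1(3) by (simp add: p_def height_add_scaleR inner_commute)
  ultimately have "p \<in> F" using cap_below_in_P[OF thin] by (simp add: mem_F_iff)
  obtain j where j: "j \<in> slack_forms" "\<And>i. i \<in> slack_forms \<Longrightarrow> slack j p \<le> slack i p"
    using obtain_least_slack by blast
  have "q \<in> P" using cap_below_in_P[OF thin q(1)] cross(1) by simp
  then have "(p, t1) \<in> chords_to_F g j"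
    using \<open>p \<in> F\<close> t1 j(2) by (simp add: chords_to_F_def p_def)
  then have "t1 + \<alpha> * slack j p \<le> D" by (rule margin[OF j(1)])
  moreover have "p + (t - t1) *\<^sub>R g \<in> cap \<epsilon>" using q(2) by (simp add: p_def algebra_simps)
  then have "t - t1 \<le> \<alpha> * slack j p"
    using cap_chord_above_F_le[OF thin gn \<alpha> low room \<open>p \<in> F\<close> _ _ j(1)] t1 by simp
  ultimately show ?thesis by simp
qed

lemma cap_chords_le_transversal:
  assumes thin: "thin \<epsilon>" and gn: "0 < g \<bullet> n" and \<alpha>: "0 < \<alpha>" and short: "chords_le P g D"
    and margin: "\<And>j p t. j \<in> slack_forms \<Longrightarrow> (p, t) \<in> chords_to_F g j \<Longrightarrow> t + \<alpha> * slack j p \<le> D"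
    and high: "\<epsilon> * (n \<bullet> n) \<le> D * (g \<bullet> n)" and low: "\<epsilon> * (n \<bullet> n) \<le> \<alpha> * (g \<bullet> n)"
    and room: "\<And>a b. (a, b) \<in> loose \<Longrightarrow> \<epsilon> * (n \<bullet> n) * (1 / \<alpha> + \<bar>a \<bullet> g\<bar>) \<le> (g \<bullet> n) * (b - a \<bullet> c) / 2"
  shows "chords_le (cap \<epsilon>) g D"
  unfolding chords_le_def
proof (intro allI impI)
  fix q t assume q: "q \<in> cap \<epsilon>" "q + t *\<^sub>R g \<in> cap \<epsilon>" and t: "0 \<le> t"
  have hq: "height (q + t *\<^sub>R g) = height q + t * (g \<bullet> n)"
    by (simp add: height_add_scaleR inner_commute)
  consider "height (q + t *\<^sub>R g) \<le> 0" | "0 \<le> height q" | "height q < 0" "0 < height (q + t *\<^sub>R g)"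
    by linarith
  then show "t \<le> D"
  proof cases
    case 1
    moreover have "0 \<le> t * (g \<bullet> n)" using t gn by simp
    ultimately have "height q \<le> 0" using hq by linarith
    then have "q \<in> P" "q + t *\<^sub>R g \<in> P" using cap_below_in_P[OF thin] q 1 by blast+
    then show ?thesis using short t unfolding chords_le_def by blast
  next
    case 2
    have "0 < \<epsilon>" using thin by (simp add: thin_def)
    then have "t * (g \<bullet> n) \<le> D * (g \<bullet> n)"
      using cap_height_le[OF _ q(2)] 2 high by (simp add: hq height_apex)
    then show ?thesis using gn by simp
  next
    case 3
    then show ?thesis using cap_crossing_chord_le[OF thin gn \<alpha> margin low room q] by blast
  qed
qed

lemma eventually_cap_chords_le_transversal:
  assumes D: "0 < D" and gn: "0 < g \<bullet> n" and short: "chords_le P g D"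
    and top: "\<And>p. p \<in> P \<Longrightarrow> p + D *\<^sub>R g \<in> P \<Longrightarrow> p + D *\<^sub>R g \<notin> rel_interior F"
  shows "eventually (\<lambda>\<epsilon>. chords_le (cap \<epsilon>) g D) (at_right 0)"
proof -
  obtain \<alpha> where \<alpha>: "0 < \<alpha>"
    and margin: "\<And>j p t. j \<in> slack_forms \<Longrightarrow> (p, t) \<in> chords_to_F g j \<Longrightarrow> t + \<alpha> * slack j p \<le> D"
    using chords_to_F_margin[OF short top] by blast
  have room: "\<forall>ab\<in>loose. eventually (\<lambda>\<epsilon>. \<epsilon> * (n \<bullet> n * (1 / \<alpha> + \<bar>fst ab \<bullet> g\<bar>))
      \<le> (g \<bullet> n) * (snd ab - fst ab \<bullet> c) / 2) (at_right 0)"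
  proof
    fix ab assume "ab \<in> loose"
    then have "0 < (g \<bullet> n) * (snd ab - fst ab \<bullet> c) / 2" using gn by (auto simp: loose_def)
    then show "eventually (\<lambda>\<epsilon>. \<epsilon> * (n \<bullet> n * (1 / \<alpha> + \<bar>fst ab \<bullet> g\<bar>))
      \<le> (g \<bullet> n) * (snd ab - fst ab \<bullet> c) / 2) (at_right 0)"
      by (rule eventually_at_right_0_mult_le)
  qed
  have "eventually (\<lambda>\<epsilon>. thin \<epsilon> \<and> \<epsilon> * (n \<bullet> n) \<le> D * (g \<bullet> n) \<and> \<epsilon> * (n \<bullet> n) \<le> \<alpha> * (g \<bullet> n) \<and>
      (\<forall>ab\<in>loose. \<epsilon> * (n \<bullet> n * (1 / \<alpha> + \<bar>fst ab \<bullet> g\<bar>))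
        \<le> (g \<bullet> n) * (snd ab - fst ab \<bullet> c) / 2)) (at_right 0)"
    using eventually_thin
      eventually_at_right_0_mult_le[of "D * (g \<bullet> n)" "n \<bullet> n", OF mult_pos_pos[OF D gn]]
      eventually_at_right_0_mult_le[of "\<alpha> * (g \<bullet> n)" "n \<bullet> n", OF mult_pos_pos[OF \<alpha> gn]]
      eventually_ball_finite[OF finite_loose room]
    by eventually_elim blast
  then show ?thesis
  proof (rule eventually_mono, elim conjE)
    fix \<epsilon> assume "thin \<epsilon>" "\<epsilon> * (n \<bullet> n) \<le> D * (g \<bullet> n)" "\<epsilon> * (n \<bullet> n) \<le> \<alpha> * (g \<bullet> n)"
      and room: "\<forall>ab\<in>loose. \<epsilon> * (n \<bullet> n * (1 / \<alpha> + \<bar>fst ab \<bullet> g\<bar>))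
        \<le> (g \<bullet> n) * (snd ab - fst ab \<bullet> c) / 2"
    moreover have "\<epsilon> * (n \<bullet> n) * (1 / \<alpha> + \<bar>a \<bullet> g\<bar>) \<le> (g \<bullet> n) * (b - a \<bullet> c) / 2"
      if "(a, b) \<in> loose" for a b
      using room that by (auto simp: algebra_simps)
    ultimately show "chords_le (cap \<epsilon>) g D"
      using cap_chords_le_transversal[OF _ gn \<alpha> short margin] by blast
  qed
qed

text \<open>Parallel to \<open>F\<close>, a chord of the cap above \<open>P\<close> is a copy of a chord of \<open>F\<close> shrunk towards the
  apex.\<close>
lemma cap_chords_le_parallel:
  assumes thin: "thin \<epsilon>" and gn: "g \<bullet> n = 0" and short: "chords_le P g D"
  shows "chords_le (cap \<epsilon>) g D"
  unfolding chords_le_def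
proof (intro allI impI)
  fix q t assume q: "q \<in> cap \<epsilon>" "q + t *\<^sub>R g \<in> cap \<epsilon>" and t: "0 \<le> t"
  have hq: "height (q + t *\<^sub>R g) = height q" using gn by (simp add: height_add_scaleR inner_commute)
  show "t \<le> D"
  proof (cases "height q \<le> 0")
    case True
    then have "q \<in> P" "q + t *\<^sub>R g \<in> P" using cap_below_in_P[OF thin] q hq by simp_all
    then show ?thesis using short t unfolding chords_le_def by blast
  next
    case False
    define \<tau> where "\<tau> = height q / height (apex \<epsilon>)"
    obtain f1 where f1: "f1 \<in> F" "q = (1 - \<tau>) *\<^sub>R f1 + \<tau> *\<^sub>R apex \<epsilon>"
      using cap_above_in_pyramid[OF thin q(1)] False unfolding \<tau>_def by auto
    obtain f2 where f2: "f2 \<in> F" "q + t *\<^sub>R g = (1 - \<tau>) *\<^sub>R f2 + \<tau> *\<^sub>R apex \<epsilon>"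
      using cap_above_in_pyramid[OF thin q(2)] False hq unfolding \<tau>_def by auto
    have "\<tau> \<le> 1" "0 < \<tau>"
      using cap_height_le[OF _ q(1)] height_apex_pos False thin by (auto simp: \<tau>_def thin_def)
    have "t *\<^sub>R g = (q + t *\<^sub>R g) - q" by simp
    also have "\<dots> = ((1 - \<tau>) *\<^sub>R f2 + \<tau> *\<^sub>R apex \<epsilon>) - ((1 - \<tau>) *\<^sub>R f1 + \<tau> *\<^sub>R apex \<epsilon>)"
      by (simp only: f1(2)[symmetric] f2(2)[symmetric])
    finally have tg: "t *\<^sub>R g = (1 - \<tau>) *\<^sub>R (f2 - f1)" by (simp add: algebra_simps)
    show ?thesis
    proof (cases "\<tau> = 1")
      case True
      then have "c + t *\<^sub>R g \<in> P" using tg c_in_F F_subset_P by auto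
      then show ?thesis using short t c_in_F F_subset_P unfolding chords_le_def by blast
    next
      case False
      then have "0 < 1 - \<tau>" using \<open>\<tau> \<le> 1\<close> by simp
      have "(t / (1 - \<tau>)) *\<^sub>R g = (1 / (1 - \<tau>)) *\<^sub>R (t *\<^sub>R g)" by simp
      also have "\<dots> = f2 - f1" using tg \<open>0 < 1 - \<tau>\<close> by simp
      finally have "f1 + (t / (1 - \<tau>)) *\<^sub>R g = f2" by (simp add: algebra_simps)
      moreover have "f1 \<in> P" "f2 \<in> P" "0 \<le> t / (1 - \<tau>)"
        using f1(1) f2(1) F_subset_P t \<open>0 < 1 - \<tau>\<close> by auto
      ultimately have "t / (1 - \<tau>) \<le> D" using short unfolding chords_le_def by blast
      then have "t \<le> (1 - \<tau>) * D" using \<open>0 < 1 - \<tau>\<close> by (simp add: field_simps)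
      moreover have "0 \<le> D" using short c_in_F F_subset_P unfolding chords_le_def
        by (metis add_0_right order_refl scaleR_zero_left subsetD)
      then have "0 \<le> \<tau> * D" using \<open>0 < \<tau>\<close> by simp
      ultimately show ?thesis by (simp add: left_diff_distrib)
    qed
  qed
qed

lemma eventually_cap_chords_le:
  assumes D: "0 < D" and short: "chords_le P g D"
    and ends: "\<And>p. p \<in> P \<Longrightarrow> p + D *\<^sub>R g \<in> P \<Longrightarrow> p \<notin> rel_interior F \<and> p + D *\<^sub>R g \<notin> rel_interior F"
  shows "eventually (\<lambda>\<epsilon>. chords_le (cap \<epsilon>) g D) (at_right 0)"
proof -
  consider "0 < g \<bullet> n" | "g \<bullet> n = 0" | "0 < (- g) \<bullet> n" by fastforce
  then show ?thesis
  proof cases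
    case 1
    then show ?thesis using eventually_cap_chords_le_transversal[OF D _ short] ends by blast
  next
    case 2
    show ?thesis using eventually_thin by (rule eventually_mono) (rule cap_chords_le_parallel[OF _ 2 short])
  next
    case 3
    have "p + D *\<^sub>R (- g) \<notin> rel_interior F" if "p \<in> P" "p + D *\<^sub>R (- g) \<in> P" for p
      using ends[of "p + D *\<^sub>R (- g)"] that by simp
    then have "eventually (\<lambda>\<epsilon>. chords_le (cap \<epsilon>) (- g) D) (at_right 0)"
      using eventually_cap_chords_le_transversal[OF D 3] short chords_le_uminus by blast
    then show ?thesis by (simp add: chords_le_uminus)
  qed
qed

lemma P_subset_cap: "P \<subseteq> cap \<epsilon>"
  unfolding cap_def by (rule subset_trans[OF subset_insertI hull_subset])

lemma P_psubset_cap: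
  assumes "0 < \<epsilon>"
  shows "P \<subset> cap \<epsilon>"
proof -
  have "apex \<epsilon> \<in> cap \<epsilon>" unfolding cap_def by (rule hull_inc) simp
  moreover have "apex \<epsilon> \<notin> P" using height_apex_pos[OF assms] height_le_0 by force
  ultimately show ?thesis using P_subset_cap by blast
qed

lemma convex_body_cap:
  assumes "convex_body P"
  shows "convex_body (cap \<epsilon>)"
proof -
  have "compact (insert (apex \<epsilon>) P)" using assms by (simp add: convex_body_def)
  then have "compact (cap \<epsilon>)" unfolding cap_def by (rule compact_convex_hull)
  moreover have "interior P \<subseteq> interior (cap \<epsilon>)" using P_subset_cap by (rule interior_mono)
  ultimately show ?thesis
    using assms by (auto simp: convex_body_def cap_def convex_convex_hull)
qed

lemma cap_subset_cball:
  assumes "P \<subseteq> cball 0 R" "0 < \<epsilon>" "\<epsilon> \<le> 1"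
  shows "cap \<epsilon> \<subseteq> cball 0 (max R (norm c + norm n))"
  unfolding cap_def
proof (rule hull_minimal)
  have "norm (apex \<epsilon>) \<le> norm c + norm (\<epsilon> *\<^sub>R n)" unfolding apex_def by (rule norm_triangle_ineq)
  also have "\<dots> \<le> norm c + norm n" using assms(2,3) by (simp add: mult_left_le_one_le)
  finally show "insert (apex \<epsilon>) P \<subseteq> cball 0 (max R (norm c + norm n))" using assms(1) by auto
qed (rule convex_cball)

lemma eventually_cap_chords_le_lattice_diam:
  assumes L: "is_lattice L" and body: "convex_body P" and g: "lattice_primitive L g"
    and avoid: "\<And>p q. diameter_segment L P p q \<Longrightarrow> p \<notin> rel_interior F \<and> q \<notin> rel_interior F"
  shows "eventually (\<lambda>\<epsilon>. chords_le (cap \<epsilon>) g (lattice_diam L P)) (at_right 0)"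
proof (rule eventually_cap_chords_le)
  show "0 < lattice_diam L P" by (rule lattice_diam_pos[OF L body])
  show "chords_le P g (lattice_diam L P)" by (rule chords_le_lattice_diam[OF L bounded_P convex_P g])
  fix p assume "p \<in> P" "p + lattice_diam L P *\<^sub>R g \<in> P"
  then have "diameter_segment L P p (p + lattice_diam L P *\<^sub>R g)"
    by (rule diameter_segment_along_primitive[OF L convex_P g lattice_diam_pos[OF L body]])
  then show "p \<notin> rel_interior F \<and> p + lattice_diam L P *\<^sub>R g \<notin> rel_interior F" by (rule avoid)
qed

lemma obtain_cap_same_lattice_diam:
  assumes L: "is_lattice L" and body: "convex_body P"
    and avoid: "\<And>p q. diameter_segment L P p q \<Longrightarrow> p \<notin> rel_interior F \<and> q \<notin> rel_interior F"
  obtains \<epsilon> where "0 < \<epsilon>" "lattice_diam L (cap \<epsilon>) = lattice_diam L P"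
proof -
  define D where "D = lattice_diam L P"
  have D: "0 < D" using lattice_diam_pos[OF L body] by (simp add: D_def)
  obtain R where "\<forall>x\<in>P. norm x \<le> R" using bounded_P by (auto simp: bounded_iff)
  then have R: "P \<subseteq> cball 0 R" by auto
  define G where "G = {g \<in> L \<inter> cball 0 (2 * max R (norm c + norm n) / D). lattice_primitive L g}"
  have "G \<subseteq> L \<inter> cball 0 (2 * max R (norm c + norm n) / D)" by (auto simp: G_def)
  then have "finite G" using is_lattice_finite_cball[OF L] by (rule finite_subset)
  moreover have "eventually (\<lambda>\<epsilon>. chords_le (cap \<epsilon>) g D) (at_right 0)" if "g \<in> G" for g
    unfolding D_def
    by (rule eventually_cap_chords_le_lattice_diam[OF L body _ avoid]) (use that in \<open>simp add: G_def\<close>)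
  ultimately have "eventually (\<lambda>\<epsilon>. \<forall>g\<in>G. chords_le (cap \<epsilon>) g D) (at_right 0)"
    by (intro eventually_ball_finite ballI) blast+
  moreover have "eventually (\<lambda>\<epsilon>::real. \<epsilon> * 1 \<le> 1) (at_right 0)"
    by (rule eventually_at_right_0_mult_le) simp
  ultimately have "eventually (\<lambda>\<epsilon>. 0 < \<epsilon> \<and> \<epsilon> \<le> 1 \<and> (\<forall>g\<in>G. chords_le (cap \<epsilon>) g D)) (at_right 0)"
    using eventually_at_right_less[of "0::real"] by eventually_elim simp
  then obtain \<epsilon> where \<epsilon>: "0 < \<epsilon>" "\<epsilon> \<le> 1" "\<forall>g\<in>G. chords_le (cap \<epsilon>) g D"
    using eventually_happens'[OF trivial_limit_at_right_real] by blast
  have "lattice_diam L (cap \<epsilon>) \<le> D"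
  proof (rule lattice_diam_le_if_chords_le[OF L _ cap_subset_cball[OF R \<epsilon>(1,2)] D])
    show "cap \<epsilon> \<noteq> {}" using P_psubset_cap[OF \<epsilon>(1)] by blast
    fix g assume "lattice_primitive L g" "norm g \<le> 2 * max R (norm c + norm n) / D"
    then have "g \<in> G" by (simp add: G_def lattice_primitive_def primitive_generator_def)
    then show "chords_le (cap \<epsilon>) g D" using \<epsilon>(3) by blast
  qed
  moreover have "bounded (cap \<epsilon>)"
    using convex_body_cap[OF body] by (simp add: convex_body_def compact_imp_bounded)
  then have "D \<le> lattice_diam L (cap \<epsilon>)"
    unfolding D_def using c_in_F F_subset_P by (intro lattice_diam_mono[OF L _ P_subset_cap]) auto
  ultimately show ?thesis using that \<epsilon>(1) by (simp add: D_def)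
qed

end

lemma facet_diameter_segment_if_lattice_complete:
  fixes L :: "'a::euclidean_space set" and P :: "'a set"
  assumes L: "is_lattice L" and P: "polytope P" "aff_dim P = int DIM('a)"
    and complete: "lattice_complete L P" and F: "F facet_of P"
  shows "\<exists>a b. diameter_segment L P a b \<and> (a \<in> rel_interior F \<or> b \<in> rel_interior F)"
proof (rule ccontr)
  assume none: "\<not> ?thesis"
  have body: "convex_body P" by (rule polytope_imp_convex_body[OF P])
  have "polyhedron P" "bounded P"
    using polytope_imp_polyhedron[OF P(1)] polytope_imp_bounded[OF P(1)] .
  obtain K where K: "finite K" "P = {y. \<forall>(a, b)\<in>K. a \<bullet> y \<le> b}"
    using polyhedron_obtain_inequalities[OF \<open>polyhedron P\<close>] by blast
  obtain n h where nh: "n \<noteq> 0" "P \<subseteq> {y. n \<bullet> y \<le> h}" "F = P \<inter> {y. n \<bullet> y = h}"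
    using facet_of_polyhedron[OF \<open>polyhedron P\<close> F] by blast
  have "convex F" using face_of_imp_convex[OF facet_of_imp_face_of[OF F]] .
  moreover have "F \<noteq> {}" using F by (simp add: facet_of_def)
  ultimately obtain c where "c \<in> rel_interior F" using rel_interior_eq_empty by blast
  interpret facet_cap K P F n c h
    using K \<open>bounded P\<close> nh facet_affine_hull[OF P(2) F nh(1,3)] \<open>c \<in> rel_interior F\<close>
    by unfold_locales blast+
  have "p \<notin> rel_interior F \<and> q \<notin> rel_interior F" if "diameter_segment L P p q" for p q
    using none that by blast
  then obtain \<epsilon> where \<epsilon>: "0 < \<epsilon>" "lattice_diam L (cap \<epsilon>) = lattice_diam L P"
    using obtain_cap_same_lattice_diam[OF L body] by blast
  then have "convex_body (cap \<epsilon>) \<and> P \<subset> cap \<epsilon> \<and> lattice_diam L (cap \<epsilon>) = lattice_diam L P"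
    using convex_body_cap[OF body] P_psubset_cap by simp
  then show False using complete unfolding lattice_complete_def by blast
qed

theorem proposition3p7:
  fixes L :: "'a::euclidean_space set" and P :: "'a set"
  assumes "is_lattice L"
    and "polytope P" and "aff_dim P = int DIM('a)"
  shows "lattice_complete L P \<longleftrightarrow>
    (\<forall>F. F facet_of P \<longrightarrow>
       (\<exists>a b. diameter_segment L P a b \<and> (a \<in> rel_interior F \<or> b \<in> rel_interior F)))"
  using facet_diameter_segment_if_lattice_complete[OF assms]
    lattice_complete_if_facet_diameter_segments[OF assms] by blast

end
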